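(* Let $Z\in\mathbb{R}^{n\times a}$ and $W\in\mathbb{R}^{a\times b}$, and $\Phi=ZW$. Let $\Sigma_Z=\frac1n Z^\top Z$ and let $W=QS$ be the right polar decomposition of $W$, where $Q\in\mathbb{R}^{a\times b}$ has orthonormal columns and $S=(W^\top W)^{1/2}$. Let $\eta_1\ge\cdots\ge\eta_d>0$ be the positive eigenvalues of $Q^\top\Sigma_Z Q$, with $d=\operatorname{rank}(Q^\top\Sigma_ZQ)\ge 1$, and for $\delta\in[0,1]$ let $\mathrm{srank}_\delta(\Phi)=\min\{k:\ \sum_{i=1}^k\sigma_i(\Phi)/\sum_{i=1}^d\sigma_i(\Phi)\ge 1-\delta\}$, where $\sigma_1(\Phi)\ge\cdots\ge\sigma_d(\Phi)$ are the nonzero singular values of $\Phi$. If $\varepsilon=\sqrt{\mathrm{DfI}(W)}<1$, then \[ \mathrm{srank}_\delta(\Phi)\ge\left\lceil\frac{(1-\delta)d}{\delta\sqrt{\frac{1+\varepsilon}{1-\varepsilon}}\sqrt{\frac{\eta_1}{\eta_d}}+(1-\delta)}\right\rceil . \] If additionally $\Sigma_Z=I$, then \[ \mathrm{srank}_\delta(\Phi)\ge\left\lceil\frac{(1-\delta)d}{\delta\sqrt{\frac{1+\varepsilon}{1-\varepsilon}}+(1-\delta)}\right\rceil . \]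
   Context: $\mathrm{DfI}(W)=\|W^\top W-I\|_F^2$ (Deviation from Isometry), with $\|\cdot\|_F$ the Frobenius norm. $\lceil\cdot\rceil$ is the ceiling function. *)

theory Defs
  imports "Jordan_Normal_Form.Jordan_Normal_Form" "Jordan_Normal_Form.DL_Rank"
begin

definition DfI :: "real mat \<Rightarrow> real" where
  "DfI W = (let M = transpose_mat W * W - 1\<^sub>m (dim_col W) in
     (\<Sum>i<dim_row M. \<Sum>j<dim_col M. (M $$ (i,j))^2))"

definition psd_mat :: "real mat \<Rightarrow> bool" where
  "psd_mat S = (transpose_mat S = S \<and>
     (\<forall>v \<in> carrier_vec (dim_row S). v \<bullet> (S *\<^sub>v v) \<ge> 0))"

text \<open>Nonzero singular values of a real matrix, in decreasing order, counted with
  multiplicity: their squares are the nonzero eigenvalues (with algebraic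
  multiplicity) of Phi^T Phi.\<close>
definition nz_singular_values :: "real mat \<Rightarrow> real list" where
  "nz_singular_values P = (THE s. sorted_wrt (\<ge>) s \<and> (\<forall>x \<in> set s. x > 0) \<and>
     char_poly (transpose_mat P * P) =
       monom 1 (dim_col P - length s) * (\<Prod>x\<leftarrow>s. [:-(x^2), 1:]))"

definition srank :: "real \<Rightarrow> real mat \<Rightarrow> nat" where
  "srank \<delta> P = (let \<sigma> = nz_singular_values P in
     (LEAST k. sum_list (take k \<sigma>) / sum_list \<sigma> \<ge> 1 - \<delta>))"

end

(*
  Write Phi = Z W = C S with C = Z Q. Then M = Q^T Sigma_Z Q = C^T C / n and
  Phi^T Phi = S (C^T C) S. Because S^T S = W^T W, the quadratic form of S differs from |x|^2
  by at most eps |x|^2 with eps = |W^T W - I|_F, so S is a near-isometry.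
  If u is a unit eigenvector of Phi^T Phi for an eigenvalue s^2 > 0 and y = S u, then
  s^2 = n y^T M y <= n (1 + eps) eta_1, and s^4 = n^2 |S M y|^2 >= n^2 (1 - eps) |M y|^2
  >= n (1 - eps) eta_d s^2. Hence any two nonzero singular values of Phi differ by a factor of
  at most K = sqrt ((1 + eps) / (1 - eps)) sqrt (eta_1 / eta_d). As S is invertible, there are
  at least d = rank M of them. Finally, if the first k of L >= d values, each within a factor K
  of any other, carry a fraction 1 - delta of their sum, then (1 - delta) (L - k) <= delta k K,
  i.e. k >= (1 - delta) L / (delta K + 1 - delta).
*)
theory Submission
  imports Defs
begin

section \<open>Real symmetric matrices are orthogonally diagonalizable\<close>

lemma scalar_prod_self_nonneg:
  fixes v :: "real vec"
  shows "0 \<le> v \<bullet> v"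
  unfolding scalar_prod_def by (intro sum_nonneg) auto

lemma scalar_prod_self_pos:
  fixes v :: "real vec"
  assumes "v \<in> carrier_vec n" "v \<noteq> 0\<^sub>v n"
  shows "0 < v \<bullet> v"
proof -
  obtain j where "j < n" "v $ j \<noteq> 0"
    using assms by (metis carrier_vecD eq_vecI index_zero_vec)
  then show ?thesis
    unfolding scalar_prod_def using assms(1) by (intro sum_pos2[of _ j]) (auto simp: zero_less_mult_iff)
qed

lemma scalar_prod_mult_mat_vec_self:
  fixes A :: "real mat"
  assumes A: "A \<in> carrier_mat nr nc" and x: "x \<in> carrier_vec nc"
  shows "(A *\<^sub>v x) \<bullet> (A *\<^sub>v x) = x \<bullet> ((transpose_mat A * A) *\<^sub>v x)"
proof -
  have "(A *\<^sub>v x) \<bullet> (A *\<^sub>v x) = (transpose_mat A *\<^sub>v (A *\<^sub>v x)) \<bullet> x"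
    using transpose_vec_mult_scalar[OF A x, of "A *\<^sub>v x"] A x by simp
  also have "\<dots> = x \<bullet> (transpose_mat A *\<^sub>v (A *\<^sub>v x))"
    using A x by (intro comm_scalar_prod[of _ nc]) auto
  finally show ?thesis
    using A x by (simp add: assoc_mult_mat_vec[of _ nc nr])
qed

lemma hermitian_form_of_real_symmetric_real:
  fixes A :: "real mat" and v :: "complex vec"
  assumes A: "A \<in> carrier_mat n n" and sym: "transpose_mat A = A" and v: "v \<in> carrier_vec n"
  defines "h \<equiv> (\<Sum>i<n. cnj (v $ i) * (map_mat complex_of_real A *\<^sub>v v) $ i)"
  shows "cnj h = h"
proof -
  have sym_entry: "A $$ (j,i) = A $$ (i,j)" if "i < n" "j < n" for i j
    using sym that A by (metis carrier_matD index_transpose_mat(1))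
  have "h = (\<Sum>i<n. \<Sum>j<n. cnj (v $ i) * of_real (A $$ (i,j)) * v $ j)"
    unfolding h_def using A v
    by (auto simp: scalar_prod_def lessThan_atLeast0 sum_distrib_left mult.assoc intro!: sum.cong)
  moreover have "cnj (\<Sum>i<n. \<Sum>j<n. cnj (v $ i) * of_real (A $$ (i,j)) * v $ j)
      = (\<Sum>i<n. \<Sum>j<n. v $ i * of_real (A $$ (i,j)) * cnj (v $ j))"
    by (simp add: cnj_sum)
  moreover have "\<dots> = (\<Sum>j<n. \<Sum>i<n. v $ i * of_real (A $$ (i,j)) * cnj (v $ j))"
    by (rule sum.swap)
  moreover have "\<dots> = (\<Sum>j<n. \<Sum>i<n. cnj (v $ j) * of_real (A $$ (j,i)) * v $ i)"
    by (intro sum.cong refl) (simp add: sym_entry mult.commute mult.left_commute)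
  ultimately show ?thesis by simp
qed

lemma real_symmetric_complex_eigenvalue_real:
  fixes A :: "real mat"
  assumes A: "A \<in> carrier_mat n n" and sym: "transpose_mat A = A"
    and ev: "eigenvalue (map_mat complex_of_real A) c"
  shows "c = of_real (Re c)"
proof -
  let ?Ac = "map_mat complex_of_real A"
  obtain v where v: "v \<in> carrier_vec n" "v \<noteq> 0\<^sub>v n" "?Ac *\<^sub>v v = c \<cdot>\<^sub>v v"
    using ev A unfolding eigenvalue_def eigenvector_def by auto
  define N where "N = (\<Sum>i<n. (cmod (v $ i))\<^sup>2)"
  obtain i where "i < n" "v $ i \<noteq> 0"
    using v(1,2) by (metis carrier_vecD eq_vecI index_zero_vec)
  then have N_pos: "N > 0"
    unfolding N_def by (intro sum_pos2[of _ i]) auto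
  have "cnj (v $ i) * v $ i = of_real ((cmod (v $ i))\<^sup>2)" for i
    by (simp only: complex_norm_square mult.commute)
  then have "(\<Sum>i<n. cnj (v $ i) * (?Ac *\<^sub>v v) $ i) = c * of_real N"
    unfolding v(3) N_def of_real_sum using v(1) by (simp add: sum_distrib_left mult.left_commute)
  with hermitian_form_of_real_symmetric_real[OF A sym v(1)]
  have "cnj c * of_real N = c * of_real N" by (metis complex_cnj_complex_of_real complex_cnj_mult)
  then have "cnj c = c" using N_pos by simp
  then show ?thesis by (metis Reals_cnj_iff Re_complex_of_real Reals_cases)
qed

lemma unit_eigenvector_exists:
  fixes A :: "real mat"
  assumes A: "A \<in> carrier_mat n n" and ev: "eigenvalue A l"
  shows "\<exists>v \<in> carrier_vec n. v \<bullet> v = 1 \<and> A *\<^sub>v v = l \<cdot>\<^sub>v v"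
proof -
  obtain w where w: "w \<in> carrier_vec n" "w \<noteq> 0\<^sub>v n" "A *\<^sub>v w = l \<cdot>\<^sub>v w"
    using ev A unfolding eigenvalue_def eigenvector_def by auto
  have ww: "w \<bullet> w > 0" by (rule scalar_prod_self_pos[OF w(1,2)])
  define v where "v = (1 / sqrt (w \<bullet> w)) \<cdot>\<^sub>v w"
  have "v \<bullet> v = (1 / sqrt (w \<bullet> w))\<^sup>2 * (w \<bullet> w)"
    unfolding v_def using w(1) by (simp add: power2_eq_square)
  also have "\<dots> = 1" using ww by (simp add: power_divide)
  finally have "v \<bullet> v = 1" .
  moreover have "A *\<^sub>v v = l \<cdot>\<^sub>v v"
    unfolding v_def using A w by (simp add: mult_mat_vec smult_smult_assoc mult.commute)
  moreover have "v \<in> carrier_vec n" unfolding v_def using w(1) by simp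
  ultimately show ?thesis by blast
qed

lemma real_symmetric_unit_eigenvector:
  fixes A :: "real mat"
  assumes A: "A \<in> carrier_mat n n" and sym: "transpose_mat A = A" and n: "n > 0"
  shows "\<exists>l. \<exists>v \<in> carrier_vec n. v \<bullet> v = 1 \<and> A *\<^sub>v v = l \<cdot>\<^sub>v v"
proof -
  let ?Ac = "map_mat complex_of_real A"
  have Ac: "?Ac \<in> carrier_mat n n" using A by auto
  obtain cs where "char_poly ?Ac = (\<Prod>c\<leftarrow>cs. [:- c, 1:])" and "length cs = n"
    using char_poly_factorized[OF Ac] by blast
  then have root: "poly (char_poly ?Ac) (cs ! 0) = 0"
    using n by (auto simp: poly_prod_list prod_list_zero_iff)
  then have "eigenvalue ?Ac (cs ! 0)" using eigenvalue_root_char_poly[OF Ac] by simp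
  then have real: "cs ! 0 = of_real (Re (cs ! 0))"
    by (rule real_symmetric_complex_eigenvalue_real[OF A sym])
  have "poly (map_poly complex_of_real (char_poly A)) (of_real (Re (cs ! 0))) = 0"
    using root real of_real_hom.char_poly_hom[OF A] by metis
  then have "poly (char_poly A) (Re (cs ! 0)) = 0" by (simp add: of_real_hom.poly_map_poly)
  then have "eigenvalue A (Re (cs ! 0))" using eigenvalue_root_char_poly[OF A] by simp
  then show ?thesis using unit_eigenvector_exists[OF A] by blast
qed

definition orth_diagonalization :: "nat \<Rightarrow> real mat \<Rightarrow> real mat \<Rightarrow> real mat \<Rightarrow> bool" where
  "orth_diagonalization n A U D \<longleftrightarrow>
     U \<in> carrier_mat n n \<and> D \<in> carrier_mat n n \<and> diagonal_mat D \<and>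
     transpose_mat U * U = 1\<^sub>m n \<and> U * transpose_mat U = 1\<^sub>m n \<and> A = U * D * transpose_mat U"

text \<open>For \<open>c = 2 / (w \<bullet> w)\<close> this is the reflection in the hyperplane orthogonal to \<open>w\<close>.\<close>
definition householder_mat :: "nat \<Rightarrow> real \<Rightarrow> real vec \<Rightarrow> real mat" where
  "householder_mat n c w = mat n n (\<lambda>(i,j). (if i = j then 1 else 0) - c * w $ i * w $ j)"

lemma householder_mat_involution:
  assumes w: "w \<in> carrier_vec n" and c: "c * c * (w \<bullet> w) = 2 * c"
  shows "householder_mat n c w * householder_mat n c w = 1\<^sub>m n"
proof (rule eq_matI)
  let ?H = "householder_mat n c w"
  fix i j assume "i < dim_row (1\<^sub>m n :: real mat)" "j < dim_col (1\<^sub>m n :: real mat)"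
  then have i: "i < n" and j: "j < n" by auto
  have "(?H * ?H) $$ (i,j) = (\<Sum>k\<in>{0..<n}. ?H $$ (i,k) * ?H $$ (k,j))"
    using i j by (simp add: householder_mat_def scalar_prod_def)
  also have "\<dots> = (\<Sum>k\<in>{0..<n}. (if i = k then (if k = j then 1 else 0) - c * w $ k * w $ j else 0)
      - (if k = j then c * w $ i * w $ k else 0) + c * c * w $ i * w $ j * (w $ k * w $ k))"
    unfolding householder_mat_def using i j by (intro sum.cong refl) (auto simp: algebra_simps)
  also have "\<dots> = (if i = j then 1 else 0) - c * w $ i * w $ j - c * w $ i * w $ j
      + c * c * w $ i * w $ j * (w \<bullet> w)"
    unfolding scalar_prod_def using i j w
    by (simp add: sum.distrib sum_subtractf sum_distrib_left[symmetric])
  also have "c * c * w $ i * w $ j * (w \<bullet> w) = (c * c * (w \<bullet> w)) * (w $ i * w $ j)"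
    by (simp add: algebra_simps)
  finally show "(?H * ?H) $$ (i,j) = 1\<^sub>m n $$ (i,j)" using i j c by simp
qed (auto simp: householder_mat_def)

lemma householder_reflection:
  fixes v :: "real vec"
  assumes v: "v \<in> carrier_vec n" "v \<bullet> v = 1" and n: "n > 0"
  shows "\<exists>H \<in> carrier_mat n n. transpose_mat H = H \<and> H * H = 1\<^sub>m n \<and> H *\<^sub>v unit_vec n 0 = v"
proof (cases "v = unit_vec n 0")
  case True
  then show ?thesis by (intro bexI[of _ "1\<^sub>m n"]) auto
next
  case False
  define e where "e = (unit_vec n 0 :: real vec)"
  have e: "e \<in> carrier_vec n" unfolding e_def by simp
  define w where "w = v - e"
  have w: "w \<in> carrier_vec n" unfolding w_def using v e by simp
  have "w \<noteq> 0\<^sub>v n"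
  proof
    assume w0: "w = 0\<^sub>v n"
    have "v $ i = e $ i" if "i < n" for i
      using arg_cong[OF w0, of "\<lambda>x. x $ i"] that v e unfolding w_def by simp
    then have "v = e" using v(1) e by (intro eq_vecI) auto
    with False show False unfolding e_def by simp
  qed
  then have ww_pos: "w \<bullet> w > 0" by (rule scalar_prod_self_pos[OF w])
  have "w \<bullet> w = v \<bullet> v - v \<bullet> e - (e \<bullet> v - e \<bullet> e)"
    unfolding w_def using v e by (simp add: minus_scalar_prod_distrib scalar_prod_minus_distrib)
  also have "\<dots> = 2 - 2 * v $ 0" unfolding e_def using v n by simp
  finally have ww: "w \<bullet> w = 2 - 2 * v $ 0" .
  define c where "c = 2 / (w \<bullet> w)"
  define H where "H = householder_mat n c w"
  have H: "H \<in> carrier_mat n n" unfolding H_def householder_mat_def by simp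
  have "transpose_mat H = H" unfolding H_def householder_mat_def by (rule eq_matI) auto
  moreover have "H * H = 1\<^sub>m n"
    unfolding H_def using ww_pos by (intro householder_mat_involution[OF w]) (simp add: c_def)
  moreover have "H *\<^sub>v unit_vec n 0 = v"
  proof (rule eq_vecI)
    fix i assume "i < dim_vec v"
    then have i: "i < n" using v by simp
    have "w $ 0 = v $ 0 - 1" unfolding w_def e_def using v n by simp
    then have "c * w $ 0 = -1" unfolding c_def using ww_pos unfolding ww by (simp add: field_simps)
    moreover have "(H *\<^sub>v unit_vec n 0) $ i = (if i = 0 then 1 else 0) - (c * w $ 0) * w $ i"
      using H i n unfolding H_def householder_mat_def by simp
    ultimately show "(H *\<^sub>v unit_vec n 0) $ i = v $ i" using i v unfolding w_def e_def by auto
  qed (use H v in auto)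
  ultimately show ?thesis using H by blast
qed

lemma symmetric_split_block_of_eigenvector_e0:
  fixes B :: "real mat"
  assumes B: "B \<in> carrier_mat (Suc m) (Suc m)" and sym: "transpose_mat B = B"
    and Be: "B *\<^sub>v unit_vec (Suc m) 0 = l \<cdot>\<^sub>v unit_vec (Suc m) 0"
    and sb: "split_block B 1 1 = (B1, B2, B3, B4)"
  shows "B2 = 0\<^sub>m 1 m" "B3 = 0\<^sub>m m 1" "transpose_mat B4 = B4"
proof -
  have col0: "B $$ (i,0) = (if i = 0 then l else 0)" if "i < Suc m" for i
    using B that arg_cong[OF Be, of "\<lambda>x. x $ i"] by simp
  have entry_sym: "B $$ (j,i) = B $$ (i,j)" if "i < Suc m" "j < Suc m" for i j
    using sym B that by (metis carrier_matD index_transpose_mat(1))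
  have row0: "B $$ (0,j) = (if j = 0 then l else 0)" if "j < Suc m" for j
    using col0[OF that] entry_sym[OF that, of 0] by simp
  show "B2 = 0\<^sub>m 1 m" "B3 = 0\<^sub>m m 1"
    using sb B col0 row0 unfolding split_block_def by (auto intro!: eq_matI)
  show "transpose_mat B4 = B4"
    using sb B entry_sym unfolding split_block_def by (auto intro!: eq_matI simp del: One_nat_def)
qed

lemma orth_diagonalization_four_block:
  assumes B1: "B1 \<in> carrier_mat 1 1" and od: "orth_diagonalization m B4 U4 D4"
  shows "orth_diagonalization (Suc m) (four_block_mat B1 (0\<^sub>m 1 m) (0\<^sub>m m 1) B4)
           (four_block_mat (1\<^sub>m 1) (0\<^sub>m 1 m) (0\<^sub>m m 1) U4)
           (four_block_mat B1 (0\<^sub>m 1 m) (0\<^sub>m m 1) D4)"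
proof -
  define F where "F = four_block_mat (1\<^sub>m 1) (0\<^sub>m 1 m) (0\<^sub>m m 1) U4"
  define D where "D = four_block_mat B1 (0\<^sub>m 1 m) (0\<^sub>m m 1) D4"
  have U4: "U4 \<in> carrier_mat m m" and D4: "D4 \<in> carrier_mat m m" and "diagonal_mat D4"
    and U4_orth: "transpose_mat U4 * U4 = 1\<^sub>m m" "U4 * transpose_mat U4 = 1\<^sub>m m"
    and B4: "B4 = U4 * D4 * transpose_mat U4"
    using od unfolding orth_diagonalization_def by auto
  have blocks: "(1\<^sub>m 1 :: real mat) \<in> carrier_mat 1 1" "(0\<^sub>m 1 m :: real mat) \<in> carrier_mat 1 m"
    "(0\<^sub>m m 1 :: real mat) \<in> carrier_mat m 1" "transpose_mat U4 \<in> carrier_mat m m"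
    "U4 * D4 \<in> carrier_mat m m" using U4 D4 by auto
  have Ft: "transpose_mat F = four_block_mat (1\<^sub>m 1) (0\<^sub>m 1 m) (0\<^sub>m m 1) (transpose_mat U4)"
    unfolding F_def using U4 by (subst transpose_four_block_mat) auto
  have "transpose_mat F * F = 1\<^sub>m (Suc m)"
    unfolding Ft unfolding F_def using U4_orth blocks U4
    by (subst mult_four_block_mat[OF blocks(1-4) blocks(1-3) U4]) auto
  moreover have "F * transpose_mat F = 1\<^sub>m (Suc m)"
    unfolding Ft unfolding F_def using U4_orth blocks U4
    by (subst mult_four_block_mat[OF blocks(1-3) U4 blocks(1-4)]) auto
  moreover have FD: "F * D = four_block_mat B1 (0\<^sub>m 1 m) (0\<^sub>m m 1) (U4 * D4)"
    unfolding F_def D_def using U4 D4 B1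
    by (subst mult_four_block_mat[OF blocks(1-3) U4 B1 blocks(2,3) D4]) auto
  moreover have "F * D * transpose_mat F = four_block_mat B1 (0\<^sub>m 1 m) (0\<^sub>m m 1) B4"
    unfolding FD Ft B4 using U4 D4 B1
    by (subst mult_four_block_mat[OF B1 blocks(2,3,5) blocks(1-4)]) auto
  moreover have "diagonal_mat D"
    using \<open>diagonal_mat D4\<close> B1 D4 unfolding D_def diagonal_mat_def by auto
  moreover have "F \<in> carrier_mat (Suc m) (Suc m)" "D \<in> carrier_mat (Suc m) (Suc m)"
    unfolding F_def D_def using U4 D4 B1 by auto
  ultimately show ?thesis unfolding orth_diagonalization_def F_def D_def by auto
qed

lemma orth_diagonalization_conjugate:
  assumes H: "H \<in> carrier_mat n n" "transpose_mat H * H = 1\<^sub>m n" "H * transpose_mat H = 1\<^sub>m n"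
    and od: "orth_diagonalization n B F D"
  shows "orth_diagonalization n (H * B * transpose_mat H) (H * F) D"
proof -
  have F: "F \<in> carrier_mat n n" and D: "D \<in> carrier_mat n n"
    and F_orth: "transpose_mat F * F = 1\<^sub>m n" "F * transpose_mat F = 1\<^sub>m n"
    and B: "B = F * D * transpose_mat F"
    using od unfolding orth_diagonalization_def by auto
  have Ht: "transpose_mat H \<in> carrier_mat n n" and Ft: "transpose_mat F \<in> carrier_mat n n"
    using H F by auto
  have HFt: "transpose_mat (H * F) = transpose_mat F * transpose_mat H"
    using H F by (simp add: transpose_mult)
  have HtHF: "transpose_mat H * (H * F) = F"
    using assoc_mult_mat[OF Ht H(1) F] H(2) F by simp
  have FFtHt: "F * (transpose_mat F * transpose_mat H) = transpose_mat H"
    using assoc_mult_mat[OF F Ft Ht] F_orth(2) Ht by simp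
  have "transpose_mat (H * F) * (H * F) = 1\<^sub>m n"
    unfolding HFt using H F Ht Ft F_orth by (simp add: assoc_mult_mat[of _ n n _ n _ n] HtHF)
  moreover have "(H * F) * transpose_mat (H * F) = 1\<^sub>m n"
    unfolding HFt using H F Ht Ft by (simp add: assoc_mult_mat[of _ n n _ n _ n] FFtHt)
  moreover have "H * B * transpose_mat H = (H * F) * D * transpose_mat (H * F)"
    unfolding HFt B using H F D Ht Ft by (simp add: assoc_mult_mat[of _ n n _ n _ n])
  ultimately show ?thesis
    using od H F F_orth unfolding orth_diagonalization_def by auto
qed

lemma reflection_conjugate_eigenvector:
  fixes A H :: "real mat"
  assumes A: "A \<in> carrier_mat n n" "transpose_mat A = A"
    and H: "H \<in> carrier_mat n n" "transpose_mat H = H" "H * H = 1\<^sub>m n"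
    and v: "v \<in> carrier_vec n" "A *\<^sub>v v = l \<cdot>\<^sub>v v" and Hv: "H *\<^sub>v e = v"
    and e: "e \<in> carrier_vec n"
  shows "transpose_mat (H * A * H) = H * A * H" and "(H * A * H) *\<^sub>v e = l \<cdot>\<^sub>v e"
proof -
  have HA: "H * A \<in> carrier_mat n n" using H A by auto
  have "transpose_mat (H * A * H) = transpose_mat H * transpose_mat (H * A)"
    by (rule transpose_mult[OF HA H(1)])
  also have "transpose_mat (H * A) = transpose_mat A * transpose_mat H"
    by (rule transpose_mult[OF H(1) A(1)])
  finally show "transpose_mat (H * A * H) = H * A * H" using H A by simp
  have He: "H *\<^sub>v e \<in> carrier_vec n" using H(1) e by simp
  have "H *\<^sub>v v = e"
    unfolding Hv[symmetric] using assoc_mult_mat_vec[OF H(1) H(1) e] H(3) e by simp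
  moreover have "(H * A * H) *\<^sub>v e = H *\<^sub>v (A *\<^sub>v (H *\<^sub>v e))"
    by (simp only: assoc_mult_mat_vec[OF HA H(1) e] assoc_mult_mat_vec[OF H(1) A(1) He])
  ultimately show "(H * A * H) *\<^sub>v e = l \<cdot>\<^sub>v e" unfolding Hv v(2) using H v by (simp add: mult_mat_vec)
qed

theorem real_symmetric_orth_diagonalizable:
  fixes A :: "real mat"
  assumes "A \<in> carrier_mat n n" "transpose_mat A = A"
  shows "\<exists>U D. orth_diagonalization n A U D"
  using assms
proof (induction n arbitrary: A)
  case 0
  then have "orth_diagonalization 0 A (1\<^sub>m 0) A"
    unfolding orth_diagonalization_def diagonal_mat_def by (auto intro!: eq_matI)
  then show ?case by blast
next
  case (Suc m)
  note A = Suc.prems(1) and sym = Suc.prems(2)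
  obtain l v where v: "v \<in> carrier_vec (Suc m)" "v \<bullet> v = 1" "A *\<^sub>v v = l \<cdot>\<^sub>v v"
    using real_symmetric_unit_eigenvector[OF A sym] by auto
  obtain H where H: "H \<in> carrier_mat (Suc m) (Suc m)" "transpose_mat H = H"
    "H * H = 1\<^sub>m (Suc m)" "H *\<^sub>v unit_vec (Suc m) 0 = v"
    using householder_reflection[OF v(1,2)] by auto
  \<comment> \<open>conjugating by \<open>H\<close> turns \<open>v\<close> into the first basis vector and splits off a \<open>1 \<times> 1\<close> block\<close>
  define B where "B = H * A * H"
  have B: "B \<in> carrier_mat (Suc m) (Suc m)" unfolding B_def using H A by auto
  have "transpose_mat B = B" "B *\<^sub>v unit_vec (Suc m) 0 = l \<cdot>\<^sub>v unit_vec (Suc m) 0"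
    unfolding B_def using reflection_conjugate_eigenvector[OF A sym H(1-3) v(1,3) H(4) unit_vec_carrier] by auto
  moreover obtain B1 B2 B3 B4 where sb: "split_block B 1 1 = (B1, B2, B3, B4)"
    by (metis prod_cases4)
  ultimately have B2: "B2 = 0\<^sub>m 1 m" and B3: "B3 = 0\<^sub>m m 1" and B4_sym: "transpose_mat B4 = B4"
    using symmetric_split_block_of_eigenvector_e0[OF B] by blast+
  have "dim_row B = 1 + m" "dim_col B = 1 + m" using B by auto
  note spl = split_block[OF sb this]
  obtain U4 D4 where "orth_diagonalization m B4 U4 D4"
    using Suc.IH[OF spl(4) B4_sym] by blast
  then have od: "orth_diagonalization (Suc m) B
      (four_block_mat (1\<^sub>m 1) (0\<^sub>m 1 m) (0\<^sub>m m 1) U4) (four_block_mat B1 (0\<^sub>m 1 m) (0\<^sub>m m 1) D4)"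
    using orth_diagonalization_four_block[OF spl(1)] spl(5) B2 B3 by simp
  have A_conj: "A = H * B * transpose_mat H"
  proof -
    have HHA: "H * (H * A) = A" using assoc_mult_mat[OF H(1) H(1) A] H A by simp
    show ?thesis
      unfolding B_def using H A by (simp add: assoc_mult_mat[of _ "Suc m" "Suc m" _ "Suc m" _ "Suc m"] HHA)
  qed
  show ?case
    using orth_diagonalization_conjugate[OF H(1) _ _ od] H(2,3) unfolding A_conj by auto
qed

section \<open>Rayleigh bounds for positive semidefinite matrices\<close>

lemma diagonal_mat_mult_vec:
  fixes D :: "'a :: comm_ring_1 mat"
  assumes D: "D \<in> carrier_mat n n" "diagonal_mat D" and z: "z \<in> carrier_vec n" and i: "i < n"
  shows "(D *\<^sub>v z) $ i = D $$ (i,i) * z $ i"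
proof -
  have "(D *\<^sub>v z) $ i = (\<Sum>j\<in>{0..<n}. D $$ (i,j) * z $ j)"
    using D z i by (simp add: scalar_prod_def)
  also have "\<dots> = (\<Sum>j\<in>{0..<n}. if j = i then D $$ (i,i) * z $ i else 0)"
    using D i unfolding diagonal_mat_def by (intro sum.cong) auto
  finally show ?thesis using i by simp
qed

lemma orth_diagonalization_carrier:
  assumes "orth_diagonalization n A U D"
  shows "A \<in> carrier_mat n n"
  using assms unfolding orth_diagonalization_def by auto

lemma orth_diagonalization_quadratic_forms:
  assumes od: "orth_diagonalization n A U D" and y: "y \<in> carrier_vec n"
  defines "z \<equiv> transpose_mat U *\<^sub>v y"
  shows "y \<bullet> (A *\<^sub>v y) = (\<Sum>i<n. D $$ (i,i) * (z $ i)\<^sup>2)"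
    and "(A *\<^sub>v y) \<bullet> (A *\<^sub>v y) = (\<Sum>i<n. (D $$ (i,i))\<^sup>2 * (z $ i)\<^sup>2)"
    and "y \<bullet> y = (\<Sum>i<n. (z $ i)\<^sup>2)"
proof -
  have U: "U \<in> carrier_mat n n" and D: "D \<in> carrier_mat n n" "diagonal_mat D"
    and UtU: "transpose_mat U * U = 1\<^sub>m n" and UUt: "U * transpose_mat U = 1\<^sub>m n"
    and A: "A = U * D * transpose_mat U"
    using od unfolding orth_diagonalization_def by auto
  have Ut: "transpose_mat U \<in> carrier_mat n n" using U by simp
  have z: "z \<in> carrier_vec n" unfolding z_def using U y by simp
  have Dz: "D *\<^sub>v z \<in> carrier_vec n" using D z by simp
  have UD: "U * D \<in> carrier_mat n n" using U D by simp
  have Ay: "A *\<^sub>v y = U *\<^sub>v (D *\<^sub>v z)"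
    unfolding A by (simp only: assoc_mult_mat_vec[OF UD Ut y] assoc_mult_mat_vec[OF U D(1) z[unfolded z_def]] z_def)
  have Dz_index: "(D *\<^sub>v z) $ i = D $$ (i,i) * z $ i" if "i < n" for i
    by (rule diagonal_mat_mult_vec[OF D z that])
  have "y \<bullet> (A *\<^sub>v y) = z \<bullet> (D *\<^sub>v z)"
    unfolding Ay using transpose_vec_mult_scalar[OF U Dz y] by (simp add: z_def)
  also have "\<dots> = (\<Sum>i<n. D $$ (i,i) * (z $ i)\<^sup>2)"
    unfolding scalar_prod_def lessThan_atLeast0 using Dz D
    by (intro sum.cong) (simp_all add: Dz_index power2_eq_square del: index_mult_mat_vec)
  finally show "y \<bullet> (A *\<^sub>v y) = (\<Sum>i<n. D $$ (i,i) * (z $ i)\<^sup>2)" .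
  have "(A *\<^sub>v y) \<bullet> (A *\<^sub>v y) = (D *\<^sub>v z) \<bullet> (D *\<^sub>v z)"
    unfolding Ay scalar_prod_mult_mat_vec_self[OF U Dz] UtU using Dz by simp
  also have "\<dots> = (\<Sum>i<n. (D $$ (i,i))\<^sup>2 * (z $ i)\<^sup>2)"
    unfolding scalar_prod_def lessThan_atLeast0 using Dz D
    by (intro sum.cong) (simp_all add: Dz_index power2_eq_square del: index_mult_mat_vec)
  finally show "(A *\<^sub>v y) \<bullet> (A *\<^sub>v y) = (\<Sum>i<n. (D $$ (i,i))\<^sup>2 * (z $ i)\<^sup>2)" .
  have "z \<bullet> z = y \<bullet> y"
    unfolding z_def scalar_prod_mult_mat_vec_self[OF Ut y] using UUt y by simp
  then show "y \<bullet> y = (\<Sum>i<n. (z $ i)\<^sup>2)"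
    using z by (simp add: scalar_prod_def lessThan_atLeast0 power2_eq_square)
qed

lemma orth_diagonalization_eigenvector:
  assumes od: "orth_diagonalization n A U D" and i: "i < n"
  shows "A *\<^sub>v (U *\<^sub>v unit_vec n i) = D $$ (i,i) \<cdot>\<^sub>v (U *\<^sub>v unit_vec n i)"
    and "transpose_mat U *\<^sub>v (U *\<^sub>v unit_vec n i) = unit_vec n i"
    and "U *\<^sub>v unit_vec n i \<noteq> 0\<^sub>v n"
proof -
  have U: "U \<in> carrier_mat n n" and D: "D \<in> carrier_mat n n" "diagonal_mat D"
    and UtU: "transpose_mat U * U = 1\<^sub>m n" and A: "A = U * D * transpose_mat U"
    using od unfolding orth_diagonalization_def by auto
  have e: "unit_vec n i \<in> carrier_vec n" by simp
  have Ut: "transpose_mat U \<in> carrier_mat n n" using U by simp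
  show UtUe: "transpose_mat U *\<^sub>v (U *\<^sub>v unit_vec n i) = unit_vec n i"
    using assoc_mult_mat_vec[OF Ut U e] UtU by simp
  have De: "D *\<^sub>v unit_vec n i = D $$ (i,i) \<cdot>\<^sub>v unit_vec n i"
    using D i by (intro eq_vecI) (simp_all add: diagonal_mat_mult_vec[OF D] del: index_mult_mat_vec)
  have UD: "U * D \<in> carrier_mat n n" and Ue: "U *\<^sub>v unit_vec n i \<in> carrier_vec n"
    using U D by auto
  have "A *\<^sub>v (U *\<^sub>v unit_vec n i) = U *\<^sub>v (D *\<^sub>v (transpose_mat U *\<^sub>v (U *\<^sub>v unit_vec n i)))"
    unfolding A UtUe by (simp only: assoc_mult_mat_vec[OF UD Ut Ue] assoc_mult_mat_vec[OF U D(1) e] UtUe)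
  then show "A *\<^sub>v (U *\<^sub>v unit_vec n i) = D $$ (i,i) \<cdot>\<^sub>v (U *\<^sub>v unit_vec n i)"
    unfolding UtUe De using U by (simp add: mult_mat_vec)
  show "U *\<^sub>v unit_vec n i \<noteq> 0\<^sub>v n"
  proof
    assume "U *\<^sub>v unit_vec n i = 0\<^sub>v n"
    moreover have "transpose_mat U *\<^sub>v 0\<^sub>v n = 0\<^sub>v n" using Ut by (intro eq_vecI) auto
    ultimately have "unit_vec n i = (0\<^sub>v n :: real vec)" using UtUe by simp
    then show False using i by (metis index_unit_vec(1) index_zero_vec(1) zero_neq_one)
  qed
qed

lemma orth_diagonalization_char_poly:
  assumes "orth_diagonalization n A U D"
  shows "char_poly A = (\<Prod>a\<leftarrow>diag_mat D. [:- a, 1:])"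
proof -
  have U: "U \<in> carrier_mat n n" and D: "D \<in> carrier_mat n n" "diagonal_mat D"
    and "transpose_mat U * U = 1\<^sub>m n" "U * transpose_mat U = 1\<^sub>m n" and A: "A = U * D * transpose_mat U"
    using assms unfolding orth_diagonalization_def by auto
  then have "similar_mat A D"
    by (intro similar_matI[of A D U "transpose_mat U" n]) auto
  then have "char_poly A = char_poly D" by (rule char_poly_similar)
  also have "\<dots> = (\<Prod>a\<leftarrow>diag_mat D. [:- a, 1:])"
    using D by (intro char_poly_upper_triangular) (auto simp: upper_triangular_def diagonal_mat_def)
  finally show ?thesis .
qed

lemma orth_diagonalization_eigenvalue_iff:
  assumes od: "orth_diagonalization n A U D"
  shows "eigenvalue A e \<longleftrightarrow> (\<exists>i<n. e = D $$ (i,i))"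
proof
  have A: "A \<in> carrier_mat n n" and D: "D \<in> carrier_mat n n"
    using od unfolding orth_diagonalization_def by auto
  assume "eigenvalue A e"
  then have "poly (\<Prod>a\<leftarrow>diag_mat D. [:- a, 1:]) e = 0"
    using eigenvalue_root_char_poly[OF A] orth_diagonalization_char_poly[OF od] by simp
  then show "\<exists>i<n. e = D $$ (i,i)"
    using D by (auto simp: poly_prod_list_zero_iff diag_mat_def)
next
  assume "\<exists>i<n. e = D $$ (i,i)"
  then obtain i where "i < n" "e = D $$ (i,i)" by blast
  moreover have "U \<in> carrier_mat n n" using od unfolding orth_diagonalization_def by simp
  ultimately have "eigenvector A (U *\<^sub>v unit_vec n i) e"
    using orth_diagonalization_eigenvector[OF od] orth_diagonalization_carrier[OF od]
    unfolding eigenvector_def by auto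
  then show "eigenvalue A e" unfolding eigenvalue_def by blast
qed

lemma sum_unit_vec_square:
  fixes f :: "nat \<Rightarrow> real"
  assumes "i < n"
  shows "(\<Sum>k<n. f k * ((unit_vec n i :: real vec) $ k)\<^sup>2) = f i"
proof -
  have "(\<Sum>k<n. f k * ((unit_vec n i :: real vec) $ k)\<^sup>2) = (\<Sum>k<n. if k = i then f i else 0)"
    by (intro sum.cong refl) (auto simp: unit_vec_def)
  then show ?thesis using assms by simp
qed

lemma orth_diagonalization_psd_nonneg:
  assumes od: "orth_diagonalization n A U D" and psd: "psd_mat A" and i: "i < n"
  shows "0 \<le> D $$ (i,i)"
proof -
  have U: "U \<in> carrier_mat n n" and A: "A \<in> carrier_mat n n"
    using od unfolding orth_diagonalization_def by auto
  define y where "y = U *\<^sub>v unit_vec n i"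
  have y: "y \<in> carrier_vec n" unfolding y_def using U by simp
  have "y \<bullet> (A *\<^sub>v y) = (\<Sum>k<n. D $$ (k,k) * ((transpose_mat U *\<^sub>v y) $ k)\<^sup>2)"
    by (rule orth_diagonalization_quadratic_forms(1)[OF od y])
  also have "\<dots> = D $$ (i,i)"
    unfolding y_def orth_diagonalization_eigenvector(2)[OF od i] by (rule sum_unit_vec_square[OF i])
  finally have "y \<bullet> (A *\<^sub>v y) = D $$ (i,i)" .
  then show ?thesis using psd y A unfolding psd_mat_def by force
qed

definition pos_eigenvalues :: "real mat \<Rightarrow> real set" where
  "pos_eigenvalues A = {e. eigenvalue A e \<and> e > 0}"

lemma finite_pos_eigenvalues:
  fixes A :: "real mat"
  assumes A: "A \<in> carrier_mat n n"
  shows "finite (pos_eigenvalues A)"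
proof -
  have "char_poly A \<noteq> 0" using degree_monic_char_poly[OF A] by auto
  then have "finite {x. poly (char_poly A) x = 0}" by (rule poly_roots_finite)
  moreover have "pos_eigenvalues A \<subseteq> {x. poly (char_poly A) x = 0}"
    unfolding pos_eigenvalues_def using eigenvalue_root_char_poly[OF A] by auto
  ultimately show ?thesis by (rule finite_subset[rotated])
qed

lemma orth_diagonalization_pos_eigenvalues:
  assumes "orth_diagonalization n A U D"
  shows "pos_eigenvalues A = {D $$ (i,i) | i. i < n \<and> D $$ (i,i) > 0}"
  unfolding pos_eigenvalues_def orth_diagonalization_eigenvalue_iff[OF assms] by auto

lemma psd_pos_eigenvalues_nonempty:
  assumes A: "A \<in> carrier_mat n n" and psd: "psd_mat A" and nz: "A \<noteq> 0\<^sub>m n n"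
  shows "pos_eigenvalues A \<noteq> {}"
proof
  assume empty: "pos_eigenvalues A = {}"
  obtain U D where od: "orth_diagonalization n A U D"
    using real_symmetric_orth_diagonalizable[OF A] psd unfolding psd_mat_def by blast
  then have D: "D \<in> carrier_mat n n" "diagonal_mat D" and A_eq: "A = U * D * transpose_mat U"
    and U: "U \<in> carrier_mat n n"
    unfolding orth_diagonalization_def by auto
  have "D $$ (i,i) = 0" if "i < n" for i
    using orth_diagonalization_psd_nonneg[OF od psd that] empty
    unfolding orth_diagonalization_pos_eigenvalues[OF od] using that by force
  then have "D = 0\<^sub>m n n" using D unfolding diagonal_mat_def by (intro eq_matI) auto
  then have "A = 0\<^sub>m n n" unfolding A_eq using U by simp
  with nz show False ..
qed

lemma psd_rayleigh_bounds:
  assumes A: "A \<in> carrier_mat n n" and psd: "psd_mat A" and ne: "pos_eigenvalues A \<noteq> {}"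
    and y: "y \<in> carrier_vec n"
  shows "y \<bullet> (A *\<^sub>v y) \<le> Max (pos_eigenvalues A) * (y \<bullet> y)"
    and "Min (pos_eigenvalues A) * (y \<bullet> (A *\<^sub>v y)) \<le> (A *\<^sub>v y) \<bullet> (A *\<^sub>v y)"
proof -
  obtain U D where od: "orth_diagonalization n A U D"
    using real_symmetric_orth_diagonalizable[OF A] psd unfolding psd_mat_def by blast
  let ?\<Lambda> = "pos_eigenvalues A"
  have \<Lambda>: "?\<Lambda> = {D $$ (i,i) | i. i < n \<and> D $$ (i,i) > 0}"
    by (rule orth_diagonalization_pos_eigenvalues[OF od])
  have fin: "finite ?\<Lambda>" unfolding \<Lambda> by simp
  have nonneg: "0 \<le> D $$ (i,i)" if "i < n" for i
    by (rule orth_diagonalization_psd_nonneg[OF od psd that])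
  have Min_pos: "0 < Min ?\<Lambda>" using fin ne unfolding \<Lambda> by auto
  have Min_le_Max: "Min ?\<Lambda> \<le> Max ?\<Lambda>" using fin ne by simp
  have le_Max: "D $$ (i,i) \<le> Max ?\<Lambda>" if "i < n" for i
    using fin nonneg[OF that] Min_pos Min_le_Max that unfolding \<Lambda>
    by (cases "D $$ (i,i) > 0") (auto intro: Max_ge)
  have ge_Min: "Min ?\<Lambda> * D $$ (i,i) \<le> (D $$ (i,i))\<^sup>2" if "i < n" for i
  proof (cases "D $$ (i,i) > 0")
    case True
    then have "Min ?\<Lambda> \<le> D $$ (i,i)" using fin that unfolding \<Lambda> by (auto intro: Min_le)
    then show ?thesis using True by (simp add: power2_eq_square mult_right_mono)
  qed (use nonneg[OF that] in simp)
  show "y \<bullet> (A *\<^sub>v y) \<le> Max ?\<Lambda> * (y \<bullet> y)"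
    unfolding orth_diagonalization_quadratic_forms(1,3)[OF od y] sum_distrib_left
    by (intro sum_mono mult_right_mono) (auto simp: le_Max)
  show "Min ?\<Lambda> * (y \<bullet> (A *\<^sub>v y)) \<le> (A *\<^sub>v y) \<bullet> (A *\<^sub>v y)"
    unfolding orth_diagonalization_quadratic_forms(1,2)[OF od y] sum_distrib_left mult.assoc[symmetric]
    by (intro sum_mono mult_right_mono) (auto simp: ge_Min)
qed

lemma psd_mat_gram:
  fixes C :: "real mat"
  assumes C: "C \<in> carrier_mat m n"
  shows "psd_mat (transpose_mat C * C)"
  unfolding psd_mat_def
proof (intro conjI ballI)
  show "transpose_mat (transpose_mat C * C) = transpose_mat C * C"
    using C by (simp add: transpose_mult[of _ n m])
  fix v :: "real vec" assume "v \<in> carrier_vec (dim_row (transpose_mat C * C))"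
  then have v: "v \<in> carrier_vec n" using C by simp
  show "0 \<le> v \<bullet> ((transpose_mat C * C) *\<^sub>v v)"
    unfolding scalar_prod_mult_mat_vec_self[OF C v, symmetric] by (rule scalar_prod_self_nonneg)
qed

lemma smult_mult_mat_vec:
  fixes A :: "'a :: comm_semiring_0 mat"
  assumes "A \<in> carrier_mat nr nc" "v \<in> carrier_vec nc"
  shows "(k \<cdot>\<^sub>m A) *\<^sub>v v = k \<cdot>\<^sub>v (A *\<^sub>v v)"
  using assms by (intro eq_vecI) (auto simp: scalar_prod_def sum_distrib_left mult.assoc)

lemma transpose_smult_mat: "transpose_mat (k \<cdot>\<^sub>m A) = k \<cdot>\<^sub>m transpose_mat A"
  by (rule eq_matI) auto

lemma psd_mat_smult:
  assumes psd: "psd_mat A" and c: "0 \<le> c"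
  shows "psd_mat (c \<cdot>\<^sub>m A)"
  unfolding psd_mat_def
proof (intro conjI ballI)
  have A_sym: "transpose_mat A = A" and nonneg: "\<forall>v \<in> carrier_vec (dim_row A). 0 \<le> v \<bullet> (A *\<^sub>v v)"
    using psd unfolding psd_mat_def by auto
  show "transpose_mat (c \<cdot>\<^sub>m A) = c \<cdot>\<^sub>m A" unfolding transpose_smult_mat A_sym ..
  have "dim_col A = dim_row A" using index_transpose_mat(2)[of A] unfolding A_sym by (rule HOL.sym)
  then have A: "A \<in> carrier_mat (dim_row A) (dim_row A)" by (intro carrier_matI refl)
  fix v :: "real vec" assume "v \<in> carrier_vec (dim_row (c \<cdot>\<^sub>m A))"
  then have v: "v \<in> carrier_vec (dim_row A)" by (simp only: index_smult_mat(2))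
  have "(c \<cdot>\<^sub>m A) *\<^sub>v v = c \<cdot>\<^sub>v (A *\<^sub>v v)" by (rule smult_mult_mat_vec[OF A v])
  moreover have "dim_vec v = dim_vec (A *\<^sub>v v)" using v by simp
  ultimately have "v \<bullet> ((c \<cdot>\<^sub>m A) *\<^sub>v v) = c * (v \<bullet> (A *\<^sub>v v))" by simp
  then show "0 \<le> v \<bullet> ((c \<cdot>\<^sub>m A) *\<^sub>v v)" using c nonneg v by simp
qed

section \<open>Nonzero singular values\<close>

lemma order_prod_linear_factors:
  fixes xs :: "real list"
  shows "Polynomial.order c (\<Prod>x\<leftarrow>xs. [:- x, 1:]) = count (mset xs) c"
proof (induction xs)
  case Nil
  then show ?case by (simp add: order_1_eq_0)
next
  case (Cons a xs)
  have "(\<Prod>x\<leftarrow>xs. [:- x, 1:]) \<noteq> (0 :: real poly)" by (auto simp: prod_list_zero_iff)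
  then have "[:- a, 1:] * (\<Prod>x\<leftarrow>xs. [:- x, 1:]) \<noteq> 0" by (subst mult_eq_0_iff) simp
  then have "Polynomial.order c ([:- a, 1:] * (\<Prod>x\<leftarrow>xs. [:- x, 1:]))
      = Polynomial.order c [:- a, 1:] + Polynomial.order c (\<Prod>x\<leftarrow>xs. [:- x, 1:])"
    by (rule order_mult)
  then show ?case using Cons by (simp add: order_linear')
qed

lemma order_monom_mult_prod_square_factors:
  fixes c :: real and t :: "real list"
  assumes "c \<noteq> 0"
  shows "Polynomial.order c (monom 1 j * (\<Prod>x\<leftarrow>t. [:-(x\<^sup>2), 1:])) = count (mset (map (\<lambda>x. x\<^sup>2) t)) c"
proof -
  define t2 where "t2 = map (\<lambda>x. x\<^sup>2) t"
  have "(\<Prod>x\<leftarrow>t. [:-(x\<^sup>2), 1:]) = (\<Prod>x\<leftarrow>t2. [:- x, 1:])"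
    unfolding t2_def by (simp add: comp_def)
  moreover have "monom 1 j * (\<Prod>x\<leftarrow>t2. [:- x, 1:]) \<noteq> (0 :: real poly)"
    by (auto simp: prod_list_zero_iff monom_eq_0_iff)
  then have "Polynomial.order c (monom 1 j * (\<Prod>x\<leftarrow>t2. [:- x, 1:]))
      = Polynomial.order c (monom 1 j) + Polynomial.order c (\<Prod>x\<leftarrow>t2. [:- x, 1:])"
    by (rule order_mult)
  moreover have "Polynomial.order c (monom 1 j) = 0"
    by (rule order_0I) (simp add: poly_monom assms)
  ultimately show ?thesis unfolding t2_def[symmetric] by (simp only: order_prod_linear_factors add_0)
qed

lemma monom_prod_square_factors_inject:
  fixes s s' :: "real list"
  assumes s: "sorted_wrt (\<ge>) s" "\<forall>x\<in>set s. x > 0"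
    and s': "sorted_wrt (\<ge>) s'" "\<forall>x\<in>set s'. x > 0"
    and eq: "monom 1 k * (\<Prod>x\<leftarrow>s. [:-(x\<^sup>2), 1:]) = monom 1 k' * (\<Prod>x\<leftarrow>s'. [:-(x\<^sup>2), 1:])"
  shows "s = s'"
proof -
  \<comment> \<open>away from \<open>0\<close>, root multiplicities recover the multiset of squares\<close>
  have squares: "mset (map (\<lambda>x. x\<^sup>2) s) = mset (map (\<lambda>x. x\<^sup>2) s')"
  proof (rule multiset_eqI)
    fix c :: real
    show "count (mset (map (\<lambda>x. x\<^sup>2) s)) c = count (mset (map (\<lambda>x. x\<^sup>2) s')) c"
    proof (cases "c = 0")
      case True
      have "count (mset (map (\<lambda>x. x\<^sup>2) t)) 0 = 0" if "\<forall>x\<in>set t. x > (0::real)" for t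
        using that by (auto simp: count_eq_zero_iff)
      then show ?thesis using True s(2) s'(2) by simp
    next
      case False
      then show ?thesis
        using order_monom_mult_prod_square_factors[OF False, of k s]
          order_monom_mult_prod_square_factors[OF False, of k' s'] eq by simp
    qed
  qed
  have roots: "mset t = image_mset sqrt (mset (map (\<lambda>x. x\<^sup>2) t))" if "\<forall>x\<in>set t. x > (0::real)" for t
  proof -
    have "map sqrt (map (\<lambda>x. x\<^sup>2) t) = t" using that by (induction t) auto
    then show ?thesis by (metis mset_map)
  qed
  have "mset (rev s) = mset (rev s')" using roots[OF s(2)] roots[OF s'(2)] squares by simp
  moreover have "sorted (rev s)" "sorted (rev s')" using s(1) s'(1) by (simp_all add: sorted_wrt_rev)
  ultimately have "sort (rev s) = rev s" "sort (rev s) = rev s'"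
    by (auto intro: properties_for_sort)
  then show ?thesis by simp
qed

lemma prod_list_map_filter_split:
  fixes f :: "'a \<Rightarrow> 'b :: comm_monoid_mult"
  shows "(\<Prod>x\<leftarrow>xs. f x) = (\<Prod>x\<leftarrow>filter P xs. f x) * (\<Prod>x\<leftarrow>filter (\<lambda>x. \<not> P x) xs. f x)"
  by (induction xs) (auto simp: algebra_simps)

lemma prod_linear_factors_zero_roots:
  assumes "\<forall>x\<in>set xs. x = (0::real)"
  shows "(\<Prod>x\<leftarrow>xs. [:- x, 1:]) = monom 1 (length xs)"
  using assms by (induction xs) (auto simp: one_pCons monom_0 monom_Suc)

lemma char_poly_gram_orth_diagonalization:
  fixes \<Phi> :: "real mat"
  assumes \<Phi>: "\<Phi> \<in> carrier_mat m n" and od: "orth_diagonalization n (transpose_mat \<Phi> * \<Phi>) U D"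
  defines "s \<equiv> rev (sort (map sqrt (filter (\<lambda>x. x > 0) (diag_mat D))))"
  shows "char_poly (transpose_mat \<Phi> * \<Phi>) = monom 1 (dim_col \<Phi> - length s) * (\<Prod>x\<leftarrow>s. [:-(x\<^sup>2), 1:])"
proof -
  define L where "L = diag_mat D"
  define F where "F = filter (\<lambda>x. x > 0) L"
  have s: "s = rev (sort (map sqrt F))" unfolding s_def F_def L_def by (rule refl)
  have D: "D \<in> carrier_mat n n" using od unfolding orth_diagonalization_def by simp
  have "length L = n" unfolding L_def diag_mat_def using D by simp
  have "0 \<le> D $$ (i,i)" if "i < n" for i
    by (rule orth_diagonalization_psd_nonneg[OF od psd_mat_gram[OF \<Phi>] that])
  then have L_nonneg: "\<forall>x\<in>set L. x \<ge> 0" unfolding L_def diag_mat_def using D by auto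
  have "map (\<lambda>x. x\<^sup>2) (map sqrt F) = F" unfolding F_def by (induction L) auto
  then have "mset F = image_mset (\<lambda>x. x\<^sup>2) (mset (map sqrt F))" by (metis mset_map)
  also have "\<dots> = mset (map (\<lambda>x. x\<^sup>2) s)" unfolding s by simp
  finally have squares: "mset (map (\<lambda>x. x\<^sup>2) s) = mset F" by simp
  have "(\<Prod>x\<leftarrow>s. [:-(x\<^sup>2), 1:]) = prod_mset (image_mset (\<lambda>a. [:- a, 1:]) (mset (map (\<lambda>x. x\<^sup>2) s)))"
    by (simp add: multiset.map_comp comp_def flip: prod_mset_prod_list)
  also have "\<dots> = (\<Prod>a\<leftarrow>F. [:- a, 1:])" unfolding squares by (simp flip: prod_mset_prod_list)
  finally have "(\<Prod>x\<leftarrow>s. [:-(x\<^sup>2), 1:]) = (\<Prod>a\<leftarrow>F. [:- a, 1:])" .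
  moreover have "(\<Prod>a\<leftarrow>filter (\<lambda>x. \<not> x > 0) L. [:- a, 1:]) = monom 1 (dim_col \<Phi> - length s)"
  proof -
    have "length (filter (\<lambda>x. \<not> x > 0) L) = dim_col \<Phi> - length s"
      using sum_length_filter_compl[of "\<lambda>x. x > 0" L] \<open>length L = n\<close> \<Phi> unfolding s F_def by simp
    then show ?thesis using L_nonneg by (subst prod_linear_factors_zero_roots) auto
  qed
  moreover have "char_poly (transpose_mat \<Phi> * \<Phi>)
      = (\<Prod>a\<leftarrow>F. [:- a, 1:]) * (\<Prod>a\<leftarrow>filter (\<lambda>x. \<not> x > 0) L. [:- a, 1:])"
    unfolding orth_diagonalization_char_poly[OF od] L_def[symmetric] F_def
    by (rule prod_list_map_filter_split)
  ultimately show ?thesis by (simp only: mult.commute)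
qed

lemma nz_singular_values_orth_diagonalization:
  fixes \<Phi> :: "real mat"
  assumes \<Phi>: "\<Phi> \<in> carrier_mat m n" and od: "orth_diagonalization n (transpose_mat \<Phi> * \<Phi>) U D"
  shows "nz_singular_values \<Phi> = rev (sort (map sqrt (filter (\<lambda>x. x > 0) (diag_mat D))))"
proof -
  define s where "s = rev (sort (map sqrt (filter (\<lambda>x. x > 0) (diag_mat D))))"
  have s_pos: "\<forall>x\<in>set s. x > 0" and s_sorted: "sorted_wrt (\<ge>) s"
    unfolding s_def by (auto simp: sorted_wrt_rev)
  note char_poly = char_poly_gram_orth_diagonalization[OF \<Phi> od, folded s_def]
  show ?thesis
    unfolding nz_singular_values_def s_def[symmetric]
  proof (rule the_equality)
    show "sorted_wrt (\<ge>) s \<and> (\<forall>x\<in>set s. x > 0) \<and> char_poly (transpose_mat \<Phi> * \<Phi>) =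
        monom 1 (dim_col \<Phi> - length s) * (\<Prod>x\<leftarrow>s. [:-(x\<^sup>2), 1:])"
      by (intro conjI s_sorted s_pos char_poly)
  next
    fix s' assume s': "sorted_wrt (\<ge>) s' \<and> (\<forall>x\<in>set s'. x > 0) \<and> char_poly (transpose_mat \<Phi> * \<Phi>) =
        monom 1 (dim_col \<Phi> - length s') * (\<Prod>x\<leftarrow>s'. [:-(x\<^sup>2), 1:])"
    then have "monom 1 (dim_col \<Phi> - length s) * (\<Prod>x\<leftarrow>s. [:-(x\<^sup>2), 1:])
        = monom 1 (dim_col \<Phi> - length s') * (\<Prod>x\<leftarrow>s'. [:-(x\<^sup>2), 1:])"
      using char_poly by simp
    with s' have "s = s'" using monom_prod_square_factors_inject[OF s_sorted s_pos, of s'] by simp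
    then show "s' = s" ..
  qed
qed

section \<open>Rank bounds\<close>

lemma rank_sum_rank_one_le:
  fixes f g :: "'i \<Rightarrow> nat \<Rightarrow> real"
  assumes "finite I"
  shows "vec_space.rank m (mat m k (\<lambda>(j,l). \<Sum>i\<in>I. f i j * g i l)) \<le> card I"
  using assms
proof (induction I rule: finite_induct)
  case empty
  have zero: "mat m k (\<lambda>(j,l). \<Sum>i\<in>{}. f i j * g i l) = (0\<^sub>m m k :: real mat)"
    by (rule eq_matI) auto
  show ?case unfolding zero by (simp add: vec_space.rank_0I)
next
  case (insert a I)
  have "mat m k (\<lambda>(j,l). \<Sum>i\<in>insert a I. f i j * g i l)
     = mat m k (\<lambda>(j,l). \<Sum>i\<in>I. f i j * g i l) + mat m k (\<lambda>(j,l). f a j * g a l)"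
    using insert by (intro eq_matI) auto
  moreover have "vec_space.rank m (mat m k (\<lambda>(j,l). f a j * g a l)) \<le> 1"
    by (rule vec_space.rank_le_1_product_entries[of _ m k "f a" "g a"]) auto
  ultimately show ?case
    using insert vec_space.rank_subadditive[of "mat m k (\<lambda>(j,l). \<Sum>i\<in>I. f i j * g i l)" m k
        "mat m k (\<lambda>(j,l). f a j * g a l)"]
    by simp
qed

lemma rank_mult_diagonal_le:
  fixes R1 D R2 :: "real mat"
  assumes R1: "R1 \<in> carrier_mat m n" and D: "D \<in> carrier_mat n n" "diagonal_mat D"
    and R2: "R2 \<in> carrier_mat n k"
  shows "vec_space.rank m (R1 * D * R2) \<le> card {i. i < n \<and> D $$ (i,i) \<noteq> 0}"
proof -
  define I where "I = {i. i < n \<and> D $$ (i,i) \<noteq> 0}"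
  have "R1 * D * R2 = mat m k (\<lambda>(j,l). \<Sum>i\<in>I. (R1 $$ (j,i) * D $$ (i,i)) * R2 $$ (i,l))"
  proof (rule eq_matI)
    fix j l assume "j < dim_row (mat m k (\<lambda>(j,l). \<Sum>i\<in>I. (R1 $$ (j,i) * D $$ (i,i)) * R2 $$ (i,l)))"
      "l < dim_col (mat m k (\<lambda>(j,l). \<Sum>i\<in>I. (R1 $$ (j,i) * D $$ (i,i)) * R2 $$ (i,l)))"
    then have j: "j < m" and l: "l < k" by auto
    have inner: "(\<Sum>i'\<in>{0..<n}. D $$ (i,i') * R2 $$ (i',l)) = D $$ (i,i) * R2 $$ (i,l)"
      if "i < n" for i
    proof -
      have "(\<Sum>i'\<in>{0..<n}. D $$ (i,i') * R2 $$ (i',l))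
          = (\<Sum>i'\<in>{0..<n}. if i' = i then D $$ (i,i) * R2 $$ (i,l) else 0)"
        using D that unfolding diagonal_mat_def by (intro sum.cong) auto
      then show ?thesis using that by simp
    qed
    have "(R1 * D * R2) $$ (j,l) = (\<Sum>i\<in>{0..<n}. R1 $$ (j,i) * (\<Sum>i'\<in>{0..<n}. D $$ (i,i') * R2 $$ (i',l)))"
      using R1 D R2 j l by (simp add: scalar_prod_def)
    also have "\<dots> = (\<Sum>i<n. R1 $$ (j,i) * D $$ (i,i) * R2 $$ (i,l))"
      unfolding lessThan_atLeast0 by (intro sum.cong) (auto simp: inner)
    also have "\<dots> = (\<Sum>i\<in>I. R1 $$ (j,i) * D $$ (i,i) * R2 $$ (i,l))"
      unfolding I_def by (rule sum.mono_neutral_right) auto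
    finally show "(R1 * D * R2) $$ (j,l)
        = mat m k (\<lambda>(j,l). \<Sum>i\<in>I. (R1 $$ (j,i) * D $$ (i,i)) * R2 $$ (i,l)) $$ (j,l)"
      using j l by simp
  qed (use R1 R2 in auto)
  also have "vec_space.rank m \<dots> \<le> card I"
    by (rule rank_sum_rank_one_le) (simp add: I_def)
  finally show ?thesis unfolding I_def .
qed

section \<open>Near-isometric factors\<close>

lemma sum_product_square_le:
  fixes a b :: "'i \<Rightarrow> real"
  shows "(\<Sum>k\<in>I. a k * b k)\<^sup>2 \<le> (\<Sum>k\<in>I. (a k)\<^sup>2) * (\<Sum>k\<in>I. (b k)\<^sup>2)"
proof -
  \<comment> \<open>Lagrange's identity\<close>
  have expand: "(a i * b j - a j * b i)\<^sup>2
      = (a i)\<^sup>2 * (b j)\<^sup>2 + (b i)\<^sup>2 * (a j)\<^sup>2 - 2 * ((a i * b i) * (a j * b j))"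
    for i j by (simp add: power2_eq_square algebra_simps)
  have "0 \<le> (\<Sum>i\<in>I. \<Sum>j\<in>I. (a i * b j - a j * b i)\<^sup>2)" by (intro sum_nonneg) simp
  also have "\<dots> = (\<Sum>i\<in>I. \<Sum>j\<in>I. (a i)\<^sup>2 * (b j)\<^sup>2) + (\<Sum>i\<in>I. \<Sum>j\<in>I. (b i)\<^sup>2 * (a j)\<^sup>2)
      - 2 * (\<Sum>i\<in>I. \<Sum>j\<in>I. (a i * b i) * (a j * b j))"
    unfolding expand by (simp add: sum_subtractf sum.distrib sum_distrib_left)
  also have "\<dots> = 2 * ((\<Sum>k\<in>I. (a k)\<^sup>2) * (\<Sum>k\<in>I. (b k)\<^sup>2) - (\<Sum>k\<in>I. a k * b k)\<^sup>2)"
    unfolding sum_product[symmetric] by (simp add: power2_eq_square algebra_simps)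
  finally show ?thesis by simp
qed

lemma abs_sum_product_le:
  fixes a b :: "'i \<Rightarrow> real"
  shows "\<bar>\<Sum>k\<in>I. a k * b k\<bar> \<le> sqrt (\<Sum>k\<in>I. (a k)\<^sup>2) * sqrt (\<Sum>k\<in>I. (b k)\<^sup>2)"
proof -
  have "\<bar>\<Sum>k\<in>I. a k * b k\<bar> = sqrt ((\<Sum>k\<in>I. a k * b k)\<^sup>2)" by simp
  also have "\<dots> \<le> sqrt ((\<Sum>k\<in>I. (a k)\<^sup>2) * (\<Sum>k\<in>I. (b k)\<^sup>2))"
    by (rule real_sqrt_le_mono[OF sum_product_square_le])
  finally show ?thesis by (simp add: real_sqrt_mult)
qed

lemma abs_quadratic_form_le_frobenius:
  fixes G :: "real mat" and x :: "real vec"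
  assumes G: "G \<in> carrier_mat m m" and x: "x \<in> carrier_vec m"
  shows "\<bar>x \<bullet> (G *\<^sub>v x)\<bar> \<le> sqrt (\<Sum>i<m. \<Sum>j<m. (G $$ (i,j))\<^sup>2) * (x \<bullet> x)"
proof -
  let ?P = "{..<m} \<times> {..<m}"
  have "x \<bullet> (G *\<^sub>v x) = (\<Sum>i<m. \<Sum>j<m. G $$ (i,j) * (x $ i * x $ j))"
    using G x by (simp add: scalar_prod_def lessThan_atLeast0 sum_distrib_left algebra_simps)
  also have "\<dots> = (\<Sum>p\<in>?P. G $$ p * (x $ fst p * x $ snd p))"
    by (simp add: sum.cartesian_product split_def)
  finally have form: "x \<bullet> (G *\<^sub>v x) = (\<Sum>p\<in>?P. G $$ p * (x $ fst p * x $ snd p))" .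
  have "(\<Sum>p\<in>?P. (x $ fst p * x $ snd p)\<^sup>2) = (\<Sum>i<m. (x $ i)\<^sup>2) * (\<Sum>j<m. (x $ j)\<^sup>2)"
    by (simp add: sum.cartesian_product split_def power_mult_distrib sum_product)
  also have "\<dots> = (x \<bullet> x)\<^sup>2"
    using x by (simp add: scalar_prod_def lessThan_atLeast0 power2_eq_square)
  finally have "sqrt (\<Sum>p\<in>?P. (x $ fst p * x $ snd p)\<^sup>2) = x \<bullet> x"
    using scalar_prod_self_nonneg[of x] by simp
  moreover have "(\<Sum>p\<in>?P. (G $$ p)\<^sup>2) = (\<Sum>i<m. \<Sum>j<m. (G $$ (i,j))\<^sup>2)"
    by (simp add: sum.cartesian_product split_def)
  ultimately show ?thesis
    unfolding form using abs_sum_product_le[of "\<lambda>p. G $$ p" "\<lambda>p. x $ fst p * x $ snd p" ?P] by simp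
qed

lemma DfI_quadratic_form_bound:
  fixes W :: "real mat"
  assumes W: "W \<in> carrier_mat a b" and x: "x \<in> carrier_vec b"
  shows "\<bar>(W *\<^sub>v x) \<bullet> (W *\<^sub>v x) - x \<bullet> x\<bar> \<le> sqrt (DfI W) * (x \<bullet> x)"
proof -
  define G where "G = transpose_mat W * W - 1\<^sub>m b"
  have G: "G \<in> carrier_mat b b" unfolding G_def using W by auto
  have "transpose_mat W * W = G + 1\<^sub>m b" unfolding G_def using W by (intro eq_matI) auto
  then have "(W *\<^sub>v x) \<bullet> (W *\<^sub>v x) = x \<bullet> ((G + 1\<^sub>m b) *\<^sub>v x)"
    unfolding scalar_prod_mult_mat_vec_self[OF W x] by simp
  also have "\<dots> = x \<bullet> (G *\<^sub>v x) + x \<bullet> x"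
    using G x by (simp add: add_mult_distrib_mat_vec scalar_prod_add_distrib[of _ b])
  finally have "(W *\<^sub>v x) \<bullet> (W *\<^sub>v x) - x \<bullet> x = x \<bullet> (G *\<^sub>v x)" by simp
  moreover have "DfI W = (\<Sum>i<b. \<Sum>j<b. (G $$ (i,j))\<^sup>2)"
    unfolding DfI_def Let_def G_def using W by simp
  ultimately show ?thesis using abs_quadratic_form_le_frobenius[OF G x] by simp
qed

lemma inverse_exists_of_near_isometry:
  fixes S :: "real mat"
  assumes S: "S \<in> carrier_mat n n" and \<epsilon>: "\<epsilon> < 1"
    and S_bounds: "\<And>x. x \<in> carrier_vec n \<Longrightarrow> \<bar>(S *\<^sub>v x) \<bullet> (S *\<^sub>v x) - x \<bullet> x\<bar> \<le> \<epsilon> * (x \<bullet> x)"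
  shows "\<exists>S' \<in> carrier_mat n n. S' * S = 1\<^sub>m n \<and> S * S' = 1\<^sub>m n"
proof -
  have "det S \<noteq> 0"
  proof
    assume "det S = 0"
    then obtain v where v: "v \<in> carrier_vec n" "v \<noteq> 0\<^sub>v n" "S *\<^sub>v v = 0\<^sub>v n"
      using det_0_iff_vec_prod_zero[OF S] by blast
    have "(1 - \<epsilon>) * (v \<bullet> v) \<le> 0" using S_bounds[OF v(1)] v(3) by (simp add: abs_le_iff algebra_simps)
    moreover have "0 < (1 - \<epsilon>) * (v \<bullet> v)" using scalar_prod_self_pos[OF v(1,2)] \<epsilon> by simp
    ultimately show False by simp
  qed
  then show ?thesis
    using det_non_zero_imp_unit[OF S, of "()"] unfolding Units_def ring_mat_def by auto
qed

lemma inverse_congruence_cancel: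
  fixes S S' X :: "real mat"
  assumes S: "S \<in> carrier_mat n n" and S': "S' \<in> carrier_mat n n" "S' * S = 1\<^sub>m n" "S * S' = 1\<^sub>m n"
    and X: "X \<in> carrier_mat n n"
  shows "S' * (S * X * S) * S' = X"
proof -
  have "S' * (S * X * S) * S' = (S' * S) * X * (S * S')"
    using S'(1) S X by (simp add: assoc_mult_mat[of _ n n _ n _ n])
  then show ?thesis unfolding S'(2,3) left_mult_one_mat[OF X] right_mult_one_mat[OF X] .
qed

lemma congruence_eigenvector_identities:
  fixes S M :: "real mat"
  assumes S: "S \<in> carrier_mat n n" "transpose_mat S = S" and M: "M \<in> carrier_mat n n"
    and u: "u \<in> carrier_vec n" "u \<bullet> u = 1"
    and eig: "(S * (k \<cdot>\<^sub>m M) * S) *\<^sub>v u = \<mu> \<cdot>\<^sub>v u"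
  defines "y \<equiv> S *\<^sub>v u"
  shows "\<mu> = k * (y \<bullet> (M *\<^sub>v y))"
    and "\<mu> * \<mu> = k * k * ((S *\<^sub>v (M *\<^sub>v y)) \<bullet> (S *\<^sub>v (M *\<^sub>v y)))"
proof -
  define t where "t = M *\<^sub>v y"
  have y: "y \<in> carrier_vec n" and t: "t \<in> carrier_vec n" and St: "S *\<^sub>v t \<in> carrier_vec n"
    unfolding y_def t_def using S M u by auto
  have kM: "k \<cdot>\<^sub>m M \<in> carrier_mat n n" using M by simp
  have SkM: "S * (k \<cdot>\<^sub>m M) \<in> carrier_mat n n" using S kM by simp
  have "(S * (k \<cdot>\<^sub>m M) * S) *\<^sub>v u = S *\<^sub>v ((k \<cdot>\<^sub>m M) *\<^sub>v y)"
    unfolding y_def using assoc_mult_mat_vec[OF SkM S(1) u(1)] assoc_mult_mat_vec[OF S(1) kM y[unfolded y_def]]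
    by (rule trans)
  also have "(k \<cdot>\<^sub>m M) *\<^sub>v y = k \<cdot>\<^sub>v t" unfolding t_def by (rule smult_mult_mat_vec[OF M y])
  also have "S *\<^sub>v (k \<cdot>\<^sub>v t) = k \<cdot>\<^sub>v (S *\<^sub>v t)" using S t by (simp add: mult_mat_vec)
  finally have \<mu>u: "\<mu> \<cdot>\<^sub>v u = k \<cdot>\<^sub>v (S *\<^sub>v t)" unfolding eig .
  have "\<mu> = u \<bullet> (\<mu> \<cdot>\<^sub>v u)" using u by simp
  also have "\<dots> = k * (u \<bullet> (S *\<^sub>v t))" unfolding \<mu>u using u St by simp
  also have "u \<bullet> (S *\<^sub>v t) = y \<bullet> t"
    unfolding y_def using transpose_vec_mult_scalar[OF S(1) t u(1)] S(2) by simp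
  finally show "\<mu> = k * (y \<bullet> (M *\<^sub>v y))" unfolding t_def .
  have "\<mu> * \<mu> = (\<mu> \<cdot>\<^sub>v u) \<bullet> (\<mu> \<cdot>\<^sub>v u)" using u by simp
  also have "\<dots> = k * k * ((S *\<^sub>v t) \<bullet> (S *\<^sub>v t))" unfolding \<mu>u using St by simp
  finally show "\<mu> * \<mu> = k * k * ((S *\<^sub>v (M *\<^sub>v y)) \<bullet> (S *\<^sub>v (M *\<^sub>v y)))" unfolding t_def .
qed

lemma pos_eigenvalue_bounds_of_congruence:
  fixes S M :: "real mat"
  assumes S: "S \<in> carrier_mat n n" "transpose_mat S = S"
    and S_bounds: "\<And>x. x \<in> carrier_vec n \<Longrightarrow> \<bar>(S *\<^sub>v x) \<bullet> (S *\<^sub>v x) - x \<bullet> x\<bar> \<le> \<epsilon> * (x \<bullet> x)"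
    and \<epsilon>: "\<epsilon> < 1"
    and M: "M \<in> carrier_mat n n" "psd_mat M" "pos_eigenvalues M \<noteq> {}" and k: "0 \<le> k"
    and u: "u \<in> carrier_vec n" "u \<bullet> u = 1"
    and eig: "(S * (k \<cdot>\<^sub>m M) * S) *\<^sub>v u = \<mu> \<cdot>\<^sub>v u" and \<mu>: "0 < \<mu>"
  shows "k * (1 - \<epsilon>) * Min (pos_eigenvalues M) \<le> \<mu>"
    and "\<mu> \<le> k * (1 + \<epsilon>) * Max (pos_eigenvalues M)"
proof -
  let ?\<Lambda> = "pos_eigenvalues M"
  define y where "y = S *\<^sub>v u"
  define t where "t = M *\<^sub>v y"
  have y: "y \<in> carrier_vec n" and t: "t \<in> carrier_vec n"
    unfolding y_def t_def using S M u by auto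
  note \<mu>_form = congruence_eigenvector_identities[OF S M(1) u eig, folded y_def]
  have "y \<bullet> (M *\<^sub>v y) \<le> Max ?\<Lambda> * (y \<bullet> y)" by (rule psd_rayleigh_bounds(1)[OF M y])
  also have "\<dots> \<le> Max ?\<Lambda> * (1 + \<epsilon>)"
  proof -
    have "Max ?\<Lambda> \<in> ?\<Lambda>" using finite_pos_eigenvalues[OF M(1)] M(3) by (rule Max_in)
    then have "0 < Max ?\<Lambda>" unfolding pos_eigenvalues_def by simp
    moreover have "y \<bullet> y \<le> 1 + \<epsilon>" using S_bounds[OF u(1)] u(2) unfolding y_def by simp
    ultimately show ?thesis by simp
  qed
  finally show "\<mu> \<le> k * (1 + \<epsilon>) * Max ?\<Lambda>"
    unfolding \<mu>_form(1) using k by (simp add: mult_left_mono mult.commute mult.left_commute)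
  have "(1 - \<epsilon>) * (Min ?\<Lambda> * (y \<bullet> (M *\<^sub>v y))) \<le> (1 - \<epsilon>) * (t \<bullet> t)"
    unfolding t_def using psd_rayleigh_bounds(2)[OF M y] \<epsilon> by (intro mult_left_mono) auto
  also have "\<dots> \<le> (S *\<^sub>v t) \<bullet> (S *\<^sub>v t)" using S_bounds[OF t] by (simp add: abs_le_iff algebra_simps)
  finally have "k * k * ((1 - \<epsilon>) * (Min ?\<Lambda> * (y \<bullet> (M *\<^sub>v y)))) \<le> \<mu> * \<mu>"
    unfolding \<mu>_form(2) t_def by (intro mult_left_mono) auto
  then have "(k * (1 - \<epsilon>) * Min ?\<Lambda>) * \<mu> \<le> \<mu> * \<mu>"
    unfolding \<mu>_form(1) by (simp add: algebra_simps)
  then show "k * (1 - \<epsilon>) * Min ?\<Lambda> \<le> \<mu>" using \<mu> by simp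
qed

section \<open>Stable rank\<close>

lemma length_le_of_partial_sum_ratio:
  fixes s :: "real list" and K \<delta> :: real
  assumes pos: "\<forall>x\<in>set s. 0 < x" and ratio: "\<forall>x\<in>set s. \<forall>y\<in>set s. x \<le> K * y"
    and ne: "s \<noteq> []" and \<delta>: "0 \<le> \<delta>" "\<delta> \<le> 1"
    and head: "(1 - \<delta>) * sum_list s \<le> sum_list (take k s)"
  shows "(1 - \<delta>) * real (length s) \<le> real k * (\<delta> * K + (1 - \<delta>))"
proof -
  define m where "m = Min (set s)"
  have m: "m \<in> set s" "0 < m" "\<forall>x\<in>set s. m \<le> x"
    unfolding m_def using ne pos by auto
  have "m \<le> K * m" using ratio m(1) by blast
  then have K: "1 \<le> K" using m(2) by simp
  \<comment> \<open>the first \<open>k\<close> terms are at most \<open>K m\<close>, the remaining ones at least \<open>m\<close>\<close>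
  have take_bound: "sum_list (take k s) \<le> real k * (K * m)"
  proof -
    have "sum_list (take k s) \<le> real (length (take k s)) * (K * m)"
      using sum_list_mono[of "take k s" id "\<lambda>_. K * m"] ratio m(1)
      by (auto simp: sum_list_triv dest: in_set_takeD)
    also have "\<dots> \<le> real k * (K * m)" using K m(2) by (intro mult_right_mono) auto
    finally show ?thesis .
  qed
  have drop_bound: "(real (length s) - real k) * m \<le> sum_list (drop k s)"
  proof -
    have "real (length (drop k s)) * m \<le> sum_list (drop k s)"
      using sum_list_mono[of "drop k s" "\<lambda>_. m" id] m(3)
      by (auto simp: sum_list_triv dest: in_set_dropD)
    moreover have "(real (length s) - real k) * m \<le> real (length (drop k s)) * m"
      using m(2) by (intro mult_right_mono) auto
    ultimately show ?thesis by linarith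
  qed
  have "sum_list s = sum_list (take k s) + sum_list (drop k s)"
    using sum_list_append[of "take k s" "drop k s"] by simp
  then have "(1 - \<delta>) * sum_list (drop k s) \<le> \<delta> * sum_list (take k s)"
    using head by (simp add: algebra_simps)
  moreover have "(1 - \<delta>) * ((real (length s) - real k) * m) \<le> (1 - \<delta>) * sum_list (drop k s)"
    using drop_bound \<delta> by (intro mult_left_mono) auto
  moreover have "\<delta> * sum_list (take k s) \<le> \<delta> * (real k * (K * m))"
    using take_bound \<delta> by (intro mult_left_mono) auto
  ultimately have "((1 - \<delta>) * (real (length s) - real k)) * m \<le> (\<delta> * real k * K) * m"
    by (simp add: algebra_simps)
  then have "(1 - \<delta>) * (real (length s) - real k) \<le> \<delta> * real k * K"
    using m(2) by simp
  then show ?thesis by (simp add: algebra_simps)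
qed

lemma ceiling_le_least_partial_sum_ratio:
  fixes s :: "real list" and K \<delta> :: real
  assumes pos: "\<forall>x\<in>set s. 0 < x" and ratio: "\<forall>x\<in>set s. \<forall>y\<in>set s. x \<le> K * y"
    and d: "d \<le> length s" and \<delta>: "0 \<le> \<delta>" "\<delta> \<le> 1"
  shows "\<lceil>(1 - \<delta>) * real d / (\<delta> * K + (1 - \<delta>))\<rceil>
      \<le> int (LEAST k. 1 - \<delta> \<le> sum_list (take k s) / sum_list s)"
proof (cases "s = []")
  case True
  then show ?thesis using d by simp
next
  case False
  then obtain x where x: "x \<in> set s" by fastforce
  then have "x \<le> K * x" "0 < x" using ratio pos by auto
  then have K: "1 \<le> K" by simp
  have "x \<le> sum_list s" using x pos by (intro member_le_sum_list) auto
  then have "0 < sum_list s" using \<open>0 < x\<close> by simp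
  define k where "k = (LEAST k. 1 - \<delta> \<le> sum_list (take k s) / sum_list s)"
  have "1 - \<delta> \<le> sum_list (take k s) / sum_list s"
    unfolding k_def by (rule LeastI[of _ "length s"]) (use \<open>0 < sum_list s\<close> \<delta> in simp)
  then have "(1 - \<delta>) * sum_list s \<le> sum_list (take k s)"
    using \<open>0 < sum_list s\<close> by (simp add: pos_le_divide_eq)
  from length_le_of_partial_sum_ratio[OF pos ratio False \<delta> this]
  have "(1 - \<delta>) * real (length s) \<le> real k * (\<delta> * K + (1 - \<delta>))" .
  moreover have "(1 - \<delta>) * real d \<le> (1 - \<delta>) * real (length s)"
    using d \<delta> by (intro mult_left_mono) auto
  moreover have "\<delta> * 1 \<le> \<delta> * K" using K \<delta> by (intro mult_left_mono)
  ultimately show ?thesis unfolding k_def[symmetric]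
    by (simp add: ceiling_le_iff divide_le_eq)
qed

lemma gram_mult_symmetric:
  fixes C S :: "real mat"
  assumes C: "C \<in> carrier_mat m n" and S: "S \<in> carrier_mat n n" "transpose_mat S = S"
  shows "transpose_mat (C * S) * (C * S) = S * (transpose_mat C * C) * S"
proof -
  have Ct: "transpose_mat C \<in> carrier_mat n m" and CS: "C * S \<in> carrier_mat m n"
    and CtC: "transpose_mat C * C \<in> carrier_mat n n" using C S by auto
  have "transpose_mat (C * S) = S * transpose_mat C"
    using transpose_mult[OF C S(1)] S(2) by simp
  then show ?thesis
    using assoc_mult_mat[OF S(1) Ct CS] assoc_mult_mat[OF Ct C S(1)] assoc_mult_mat[OF S(1) CtC S(1)]
    by simp
qed

lemma nz_singular_values_pos_eigenvalues:
  fixes \<Phi> :: "real mat"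
  assumes \<Phi>: "\<Phi> \<in> carrier_mat m n" and od: "orth_diagonalization n (transpose_mat \<Phi> * \<Phi>) U D"
  shows "set (nz_singular_values \<Phi>) = sqrt ` {D $$ (i,i) | i. i < n \<and> D $$ (i,i) > 0}"
    and "length (nz_singular_values \<Phi>) = card {i. i < n \<and> D $$ (i,i) > 0}"
proof -
  have D: "D \<in> carrier_mat n n" using od unfolding orth_diagonalization_def by simp
  show "set (nz_singular_values \<Phi>) = sqrt ` {D $$ (i,i) | i. i < n \<and> D $$ (i,i) > 0}"
    unfolding nz_singular_values_orth_diagonalization[OF \<Phi> od] diag_mat_def using D
    by (fastforce simp: image_iff)
  have "length (filter (\<lambda>x. x > 0) (diag_mat D)) = card {i. i < n \<and> D $$ (i,i) > 0}"
    unfolding length_filter_conv_card diag_mat_def using D by (auto intro!: arg_cong[where f = card])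
  then show "length (nz_singular_values \<Phi>) = card {i. i < n \<and> D $$ (i,i) > 0}"
    unfolding nz_singular_values_orth_diagonalization[OF \<Phi> od] by simp
qed

lemma gram_pos_eigenvalue_bounds:
  fixes C S M :: "real mat"
  assumes C: "C \<in> carrier_mat m n" and S: "S \<in> carrier_mat n n" "transpose_mat S = S"
    and S_bounds: "\<And>x. x \<in> carrier_vec n \<Longrightarrow> \<bar>(S *\<^sub>v x) \<bullet> (S *\<^sub>v x) - x \<bullet> x\<bar> \<le> \<epsilon> * (x \<bullet> x)"
    and \<epsilon>: "\<epsilon> < 1"
    and M: "M = c \<cdot>\<^sub>m (transpose_mat C * C)" and c: "0 < c" and \<Lambda>: "pos_eigenvalues M \<noteq> {}"
    and od: "orth_diagonalization n (transpose_mat (C * S) * (C * S)) U D"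
    and i: "i < n" "0 < D $$ (i,i)"
  shows "(1 / c) * (1 - \<epsilon>) * Min (pos_eigenvalues M) \<le> D $$ (i,i)"
    and "D $$ (i,i) \<le> (1 / c) * (1 + \<epsilon>) * Max (pos_eigenvalues M)"
proof -
  have M_carrier: "M \<in> carrier_mat n n" unfolding M using C by simp
  have psd: "psd_mat M" unfolding M using psd_mat_smult[OF psd_mat_gram[OF C]] c by simp
  have CtC: "transpose_mat C * C = (1 / c) \<cdot>\<^sub>m M" unfolding M using c by (intro eq_matI) auto
  define u where "u = U *\<^sub>v unit_vec n i"
  have U: "U \<in> carrier_mat n n" using od unfolding orth_diagonalization_def by simp
  then have u: "u \<in> carrier_vec n" unfolding u_def by simp
  have "u \<bullet> u = (\<Sum>k<n. ((transpose_mat U *\<^sub>v u) $ k)\<^sup>2)"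
    by (rule orth_diagonalization_quadratic_forms(3)[OF od u])
  also have "\<dots> = 1"
    unfolding u_def orth_diagonalization_eigenvector(2)[OF od i(1)]
    using sum_unit_vec_square[OF i(1), of "\<lambda>_. 1"] by simp
  finally have uu: "u \<bullet> u = 1" .
  have eig: "(S * ((1 / c) \<cdot>\<^sub>m M) * S) *\<^sub>v u = D $$ (i,i) \<cdot>\<^sub>v u"
    unfolding u_def CtC[symmetric] gram_mult_symmetric[OF C S, symmetric]
    by (rule orth_diagonalization_eigenvector(1)[OF od i(1)])
  have "0 \<le> 1 / c" using c by simp
  from pos_eigenvalue_bounds_of_congruence[OF S S_bounds \<epsilon> M_carrier psd \<Lambda> this u uu eig i(2)]
  show "(1 / c) * (1 - \<epsilon>) * Min (pos_eigenvalues M) \<le> D $$ (i,i)"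
    and "D $$ (i,i) \<le> (1 / c) * (1 + \<epsilon>) * Max (pos_eigenvalues M)" by simp_all
qed

lemma nz_singular_values_ratio_bound:
  fixes C S M :: "real mat"
  assumes C: "C \<in> carrier_mat m n" and S: "S \<in> carrier_mat n n" "transpose_mat S = S"
    and S_bounds: "\<And>x. x \<in> carrier_vec n \<Longrightarrow> \<bar>(S *\<^sub>v x) \<bullet> (S *\<^sub>v x) - x \<bullet> x\<bar> \<le> \<epsilon> * (x \<bullet> x)"
    and \<epsilon>: "0 \<le> \<epsilon>" "\<epsilon> < 1"
    and M: "M = c \<cdot>\<^sub>m (transpose_mat C * C)" and c: "0 < c" and \<Lambda>: "pos_eigenvalues M \<noteq> {}"
    and x: "x \<in> set (nz_singular_values (C * S))" and y: "y \<in> set (nz_singular_values (C * S))"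
  shows "x \<le> sqrt ((1 + \<epsilon>) / (1 - \<epsilon>)) * sqrt (Max (pos_eigenvalues M) / Min (pos_eigenvalues M)) * y"
proof -
  let ?\<Lambda> = "pos_eigenvalues M"
  have \<Phi>: "C * S \<in> carrier_mat m n" using C S by simp
  have M_carrier: "M \<in> carrier_mat n n" unfolding M using C by simp
  have Min_pos: "0 < Min ?\<Lambda>"
    using Min_in[OF finite_pos_eigenvalues[OF M_carrier] \<Lambda>] unfolding pos_eigenvalues_def by simp
  have Min_le_Max: "Min ?\<Lambda> \<le> Max ?\<Lambda>"
    using finite_pos_eigenvalues[OF M_carrier] \<Lambda> by simp
  have P: "transpose_mat (C * S) * (C * S) \<in> carrier_mat n n" using \<Phi> by simp
  obtain U D where od: "orth_diagonalization n (transpose_mat (C * S) * (C * S)) U D"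
    using real_symmetric_orth_diagonalizable[OF P] psd_mat_gram[OF \<Phi>] unfolding psd_mat_def by blast
  have bounds: "(1 / c) * (1 - \<epsilon>) * Min ?\<Lambda> \<le> D $$ (i,i)" "D $$ (i,i) \<le> (1 / c) * (1 + \<epsilon>) * Max ?\<Lambda>"
    if "i < n" "0 < D $$ (i,i)" for i
    using gram_pos_eigenvalue_bounds[OF C S S_bounds \<epsilon>(2) M c \<Lambda> od that] by simp_all
  obtain i j where i: "i < n" "0 < D $$ (i,i)" "x = sqrt (D $$ (i,i))"
    and j: "j < n" "0 < D $$ (j,j)" "y = sqrt (D $$ (j,j))"
    using x y unfolding nz_singular_values_pos_eigenvalues(1)[OF \<Phi> od] by blast
  have "D $$ (i,i) \<le> (1 / c) * (1 + \<epsilon>) * Max ?\<Lambda>" by (rule bounds(2)[OF i(1,2)])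
  also have "\<dots> = ((1 + \<epsilon>) / (1 - \<epsilon>) * (Max ?\<Lambda> / Min ?\<Lambda>)) * ((1 / c) * (1 - \<epsilon>) * Min ?\<Lambda>)"
    using \<epsilon> Min_pos c by (simp add: field_simps)
  also have "\<dots> \<le> ((1 + \<epsilon>) / (1 - \<epsilon>) * (Max ?\<Lambda> / Min ?\<Lambda>)) * D $$ (j,j)"
    using bounds(1)[OF j(1,2)] \<epsilon> Min_pos Min_le_Max
    by (intro mult_left_mono) (auto intro!: divide_nonneg_nonneg mult_nonneg_nonneg)
  finally have "D $$ (i,i) \<le> (1 + \<epsilon>) / (1 - \<epsilon>) * (Max ?\<Lambda> / Min ?\<Lambda>) * D $$ (j,j)" .
  then have "sqrt (D $$ (i,i)) \<le> sqrt ((1 + \<epsilon>) / (1 - \<epsilon>) * (Max ?\<Lambda> / Min ?\<Lambda>) * D $$ (j,j))"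
    by (rule real_sqrt_le_mono)
  also have "\<dots> = sqrt ((1 + \<epsilon>) / (1 - \<epsilon>)) * sqrt (Max ?\<Lambda> / Min ?\<Lambda>) * sqrt (D $$ (j,j))"
    by (simp only: real_sqrt_mult)
  finally show ?thesis unfolding i(3) j(3) .
qed

lemma nz_singular_values_pos:
  fixes \<Phi> :: "real mat"
  assumes \<Phi>: "\<Phi> \<in> carrier_mat m n" and x: "x \<in> set (nz_singular_values \<Phi>)"
  shows "0 < x"
proof -
  have "transpose_mat \<Phi> * \<Phi> \<in> carrier_mat n n" using \<Phi> by simp
  then obtain U D where od: "orth_diagonalization n (transpose_mat \<Phi> * \<Phi>) U D"
    using real_symmetric_orth_diagonalizable psd_mat_gram[OF \<Phi>] unfolding psd_mat_def by blast
  show ?thesis using x unfolding nz_singular_values_pos_eigenvalues(1)[OF \<Phi> od] by auto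
qed

lemma rank_le_length_nz_singular_values:
  fixes C S M :: "real mat"
  assumes C: "C \<in> carrier_mat m n" and S: "S \<in> carrier_mat n n" "transpose_mat S = S"
    and S_bounds: "\<And>x. x \<in> carrier_vec n \<Longrightarrow> \<bar>(S *\<^sub>v x) \<bullet> (S *\<^sub>v x) - x \<bullet> x\<bar> \<le> \<epsilon> * (x \<bullet> x)"
    and \<epsilon>: "\<epsilon> < 1" and M: "M = c \<cdot>\<^sub>m (transpose_mat C * C)" and c: "0 < c"
  shows "vec_space.rank n M \<le> length (nz_singular_values (C * S))"
proof -
  have \<Phi>: "C * S \<in> carrier_mat m n" using C S by simp
  from inverse_exists_of_near_isometry[OF S(1) \<epsilon> S_bounds]
  obtain S' where S': "S' \<in> carrier_mat n n" "S' * S = 1\<^sub>m n" "S * S' = 1\<^sub>m n" by blast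
  have P: "transpose_mat (C * S) * (C * S) \<in> carrier_mat n n" using \<Phi> by simp
  obtain U D where od: "orth_diagonalization n (transpose_mat (C * S) * (C * S)) U D"
    using real_symmetric_orth_diagonalizable[OF P] psd_mat_gram[OF \<Phi>] unfolding psd_mat_def by blast
  then have U: "U \<in> carrier_mat n n" and D: "D \<in> carrier_mat n n" "diagonal_mat D"
    and P_eq: "transpose_mat (C * S) * (C * S) = U * D * transpose_mat U"
    unfolding orth_diagonalization_def by auto
  have Ut: "transpose_mat U \<in> carrier_mat n n" and CtC: "transpose_mat C * C \<in> carrier_mat n n"
    using U C by auto
  have "transpose_mat C * C = S' * (S * (transpose_mat C * C) * S) * S'"
    using inverse_congruence_cancel[OF S(1) S' CtC] by simp
  also have "\<dots> = (S' * U) * D * (transpose_mat U * S')"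
    unfolding gram_mult_symmetric[OF C S, symmetric] P_eq
    using S' U D Ut by (simp add: assoc_mult_mat[of _ n n _ n _ n])
  finally have CtC_eq: "transpose_mat C * C = (S' * U) * D * (transpose_mat U * S')" .
  have SU: "S' * U \<in> carrier_mat n n" and UtS: "transpose_mat U * S' \<in> carrier_mat n n"
    and SUD: "S' * U * D \<in> carrier_mat n n" using S' U D Ut by auto
  have "M = (S' * U) * (c \<cdot>\<^sub>m D) * (transpose_mat U * S')"
    unfolding M CtC_eq mult_smult_distrib[OF SU D(1)] mult_smult_assoc_mat[OF SUD UtS] ..
  moreover have "diagonal_mat (c \<cdot>\<^sub>m D)" using D unfolding diagonal_mat_def by auto
  ultimately have "vec_space.rank n M \<le> card {i. i < n \<and> (c \<cdot>\<^sub>m D) $$ (i,i) \<noteq> 0}"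
    using rank_mult_diagonal_le[of "S' * U" n n "c \<cdot>\<^sub>m D" "transpose_mat U * S'" n] S' U D Ut by simp
  also have "{i. i < n \<and> (c \<cdot>\<^sub>m D) $$ (i,i) \<noteq> 0} = {i. i < n \<and> D $$ (i,i) > 0}"
  proof (intro Collect_cong conj_cong refl)
    fix i assume i: "i < n"
    show "(c \<cdot>\<^sub>m D) $$ (i,i) \<noteq> 0 \<longleftrightarrow> 0 < D $$ (i,i)"
      using orth_diagonalization_psd_nonneg[OF od psd_mat_gram[OF \<Phi>] i] c D i by (auto simp: less_le)
  qed
  finally show ?thesis unfolding nz_singular_values_pos_eigenvalues(2)[OF \<Phi> od] .
qed

lemma srank_ge_of_near_isometric_factor:
  fixes C S M :: "real mat"
  assumes C: "C \<in> carrier_mat m n" and S: "S \<in> carrier_mat n n" "transpose_mat S = S"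
    and S_bounds: "\<And>x. x \<in> carrier_vec n \<Longrightarrow> \<bar>(S *\<^sub>v x) \<bullet> (S *\<^sub>v x) - x \<bullet> x\<bar> \<le> \<epsilon> * (x \<bullet> x)"
    and \<epsilon>: "0 \<le> \<epsilon>" "\<epsilon> < 1"
    and M: "M = c \<cdot>\<^sub>m (transpose_mat C * C)" and c: "0 \<le> c"
    and d: "1 \<le> vec_space.rank n M" and \<delta>: "0 \<le> \<delta>" "\<delta> \<le> 1"
  shows "\<lceil>(1 - \<delta>) * real (vec_space.rank n M) /
           (\<delta> * sqrt ((1 + \<epsilon>) / (1 - \<epsilon>)) * sqrt (Max (pos_eigenvalues M) / Min (pos_eigenvalues M))
            + (1 - \<delta>))\<rceil>
         \<le> int (srank \<delta> (C * S))"
proof -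
  define K where "K = sqrt ((1 + \<epsilon>) / (1 - \<epsilon>)) * sqrt (Max (pos_eigenvalues M) / Min (pos_eigenvalues M))"
  have \<Phi>: "C * S \<in> carrier_mat m n" using C S by simp
  have M_carrier: "M \<in> carrier_mat n n" unfolding M using C by simp
  have M_nonzero: "M \<noteq> 0\<^sub>m n n" using d by (auto simp: vec_space.rank_0I)
  moreover have "c = 0 \<Longrightarrow> M = 0\<^sub>m n n" unfolding M using C by (intro eq_matI) auto
  ultimately have c_pos: "0 < c" using c by fastforce
  have psd: "psd_mat M" unfolding M by (rule psd_mat_smult[OF psd_mat_gram[OF C] c])
  have \<Lambda>: "pos_eigenvalues M \<noteq> {}" by (rule psd_pos_eigenvalues_nonempty[OF M_carrier psd M_nonzero])
  have "\<lceil>(1 - \<delta>) * real (vec_space.rank n M) / (\<delta> * K + (1 - \<delta>))\<rceil>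
      \<le> int (LEAST k. 1 - \<delta> \<le> sum_list (take k (nz_singular_values (C * S))) / sum_list (nz_singular_values (C * S)))"
    using nz_singular_values_pos[OF \<Phi>] nz_singular_values_ratio_bound[OF C S S_bounds \<epsilon> M c_pos \<Lambda>]
      rank_le_length_nz_singular_values[OF C S S_bounds \<epsilon>(2) M c_pos] \<delta>
    unfolding K_def by (intro ceiling_le_least_partial_sum_ratio) auto
  then show ?thesis unfolding srank_def Let_def K_def by (simp add: mult.assoc)
qed

lemma DfI_nonneg: "0 \<le> DfI W"
  unfolding DfI_def Let_def by (simp add: sum_nonneg)

lemma polar_factor_quadratic_form_bound:
  fixes W S :: "real mat"
  assumes W: "W \<in> carrier_mat a b" and S: "S \<in> carrier_mat b b" "transpose_mat S = S"
    and S_sqrt: "S * S = transpose_mat W * W" and x: "x \<in> carrier_vec b"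
  shows "\<bar>(S *\<^sub>v x) \<bullet> (S *\<^sub>v x) - x \<bullet> x\<bar> \<le> sqrt (DfI W) * (x \<bullet> x)"
  using DfI_quadratic_form_bound[OF W x] scalar_prod_mult_mat_vec_self[OF S(1) x]
    scalar_prod_mult_mat_vec_self[OF W x] S(2) S_sqrt by simp

lemma congruence_scaled_gram:
  fixes Z Q :: "real mat"
  assumes Z: "Z \<in> carrier_mat n a" and Q: "Q \<in> carrier_mat a b"
  shows "transpose_mat Q * (c \<cdot>\<^sub>m (transpose_mat Z * Z)) * Q = c \<cdot>\<^sub>m (transpose_mat (Z * Q) * (Z * Q))"
proof -
  have Qt: "transpose_mat Q \<in> carrier_mat b a" and Zt: "transpose_mat Z \<in> carrier_mat a n"
    and ZtZ: "transpose_mat Z * Z \<in> carrier_mat a a"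
    and QtZtZ: "transpose_mat Q * (transpose_mat Z * Z) \<in> carrier_mat b a"
    and ZQ: "Z * Q \<in> carrier_mat n b" using Z Q by auto
  have "transpose_mat Q * (c \<cdot>\<^sub>m (transpose_mat Z * Z)) * Q
      = c \<cdot>\<^sub>m (transpose_mat Q * (transpose_mat Z * Z) * Q)"
    by (simp only: mult_smult_distrib[OF Qt ZtZ] mult_smult_assoc_mat[OF QtZtZ Q])
  also have "transpose_mat Q * (transpose_mat Z * Z) * Q = transpose_mat (Z * Q) * (Z * Q)"
    unfolding transpose_mult[OF Z Q]
    using assoc_mult_mat[OF Qt Zt ZQ] assoc_mult_mat[OF Zt Z Q] assoc_mult_mat[OF Qt ZtZ Q] by simp
  finally show ?thesis .
qed

lemma pos_eigenvalues_one_mat: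
  assumes "0 < n"
  shows "pos_eigenvalues (1\<^sub>m n) = {1}"
proof -
  have "orth_diagonalization n (1\<^sub>m n) (1\<^sub>m n) (1\<^sub>m n)"
    unfolding orth_diagonalization_def diagonal_mat_def by simp
  from orth_diagonalization_pos_eigenvalues[OF this] show ?thesis
    using assms by (auto intro: exI[of _ 0])
qed

theorem theorem3:
  fixes n a b :: nat and Z W Q S :: "real mat" and \<delta> :: real
  assumes Z: "Z \<in> carrier_mat n a"
    and W: "W \<in> carrier_mat a b"
    and Q: "Q \<in> carrier_mat a b"
    and S: "S \<in> carrier_mat b b"
    and Q_orth: "transpose_mat Q * Q = 1\<^sub>m b"
    and S_psd: "psd_mat S"
    and S_sqrt: "S * S = transpose_mat W * W"
    and polar: "W = Q * S"
    and d_pos: "vec_space.rank b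
                  (transpose_mat Q * ((1 / real n) \<cdot>\<^sub>m (transpose_mat Z * Z)) * Q) \<ge> 1"
    and delta: "0 \<le> \<delta>" "\<delta> \<le> 1"
    and eps: "sqrt (DfI W) < 1"
  shows "(let \<Phi> = Z * W;
              \<Sigma>\<^sub>Z = (1 / real n) \<cdot>\<^sub>m (transpose_mat Z * Z);
              M = transpose_mat Q * \<Sigma>\<^sub>Z * Q;
              d = vec_space.rank b M;
              \<eta>\<^sub>1 = Max {e. eigenvalue M e \<and> e > 0};
              \<eta>\<^sub>d = Min {e. eigenvalue M e \<and> e > 0};
              \<epsilon> = sqrt (DfI W)
          in int (srank \<delta> \<Phi>) \<ge>
               \<lceil>(1 - \<delta>) * real d /
                 (\<delta> * sqrt ((1 + \<epsilon>) / (1 - \<epsilon>)) * sqrt (\<eta>\<^sub>1 / \<eta>\<^sub>d) + (1 - \<delta>))\<rceil>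
             \<and> (\<Sigma>\<^sub>Z = 1\<^sub>m a \<longrightarrow>
                int (srank \<delta> \<Phi>) \<ge>
                 \<lceil>(1 - \<delta>) * real d /
                   (\<delta> * sqrt ((1 + \<epsilon>) / (1 - \<epsilon>)) + (1 - \<delta>))\<rceil>))"
proof -
  define \<Sigma> where "\<Sigma> = (1 / real n) \<cdot>\<^sub>m (transpose_mat Z * Z)"
  define M where "M = transpose_mat Q * \<Sigma> * Q"
  define C where "C = Z * Q"
  have C: "C \<in> carrier_mat n b" unfolding C_def using Z Q by simp
  have S_sym: "transpose_mat S = S" using S_psd unfolding psd_mat_def by simp
  \<comment> \<open>for \<open>n = 0\<close> the factor \<open>1 / real n\<close> is \<open>0\<close>, and then \<open>M = 0\<close> contradicts the rank hypothesis\<close>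
  have M_gram: "M = (1 / real n) \<cdot>\<^sub>m (transpose_mat C * C)"
    unfolding M_def \<Sigma>_def C_def by (rule congruence_scaled_gram[OF Z Q])
  have \<Phi>: "Z * W = C * S" unfolding C_def polar using Z Q S by (simp add: assoc_mult_mat)
  from srank_ge_of_near_isometric_factor[OF C S S_sym polar_factor_quadratic_form_bound[OF W S S_sym S_sqrt]
      real_sqrt_ge_zero[OF DfI_nonneg] eps M_gram _ d_pos[folded \<Sigma>_def, folded M_def] delta]
  have main: "\<lceil>(1 - \<delta>) * real (vec_space.rank b M) / (\<delta> * sqrt ((1 + sqrt (DfI W)) / (1 - sqrt (DfI W)))
      * sqrt (Max (pos_eigenvalues M) / Min (pos_eigenvalues M)) + (1 - \<delta>))\<rceil> \<le> int (srank \<delta> (Z * W))"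
    unfolding \<Phi> by simp
  have whitened: "pos_eigenvalues M = {1}" if "\<Sigma> = 1\<^sub>m a"
  proof -
    have "M = 1\<^sub>m b" unfolding M_def that using Q Q_orth by simp
    moreover have "(1\<^sub>m 0 :: real mat) = 0\<^sub>m 0 0" by (rule eq_matI) auto
    then have "0 < b" using d_pos[folded \<Sigma>_def, folded M_def] \<open>M = 1\<^sub>m b\<close>
      by (cases b) (auto simp: vec_space.rank_0I)
    ultimately show ?thesis by (simp add: pos_eigenvalues_one_mat)
  qed
  show ?thesis
    unfolding Let_def \<Sigma>_def[symmetric] M_def[symmetric] pos_eigenvalues_def[symmetric]
    using main whitened by auto
qed

end
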